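(* Let $\lambda\in(0,1)$ and consider the discounted game $\Gamma_\lambda(p,q)$ with security strategies $\sigma^*$ (player 1) and $\tau^*$ (player 2). Define $u_{l,0;\lambda}(\sigma^* )=\min_{\tau(l)}\mathbb E_{p,\sigma^*,\tau(l)}[\sum_{t=1}^\infty\lambda(1-\lambda)^{t-1}M(k,l,a_t,b_t)\mid l]$ for $l\in L$ and $w_{k,0;\lambda}(\tau^* )=\max_{\sigma(k)}\mathbb E_{q,\sigma(k),\tau^*}[\sum_{t=1}^\infty\lambda(1-\lambda)^{t-1}M(k,l,a_t,b_t)\mid k]$ for $k\in K$. Then $\mu^*$ with $\mu^{*k}=-w_{k,0;\lambda}(\tau^* )$ is an optimal solution of $\min_{\mu\in\mathbb R^{|K|}}\{\tilde V^1_\lambda(\mu,q)-p^T\mu\}$, and $\nu^*$ with $\nu^{*l}=-u_{l,0;\lambda}(\sigma^* )$ is an optimal solution of $\max_{\nu\in\mathbb R^{|L|}}\{\tilde V^2_\lambda(p,\nu)-q^T\nu\}$.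
   Context: Setting: nonempty finite type sets $K,L$, action sets $A,B$, payoff $M:K\times L\times A\times B\to\mathbb R$, $p\in\Delta(K),q\in\Delta(L)$ with positive entries. In $\Gamma_\lambda(p,q)$, $k\sim p$ and $l\sim q$ are drawn independently and told privately to players 1, 2; at each stage $t=1,2,\dots$ they choose actions simultaneously, publicly announced; behavior strategies depend on own type and both histories; payoff to player 1 (maximizer) $\mathbb E[\sum_{t\ge1}\lambda(1-\lambda)^{t-1}M(k,l,a_t,b_t)]$. Security strategies attain $\max_\sigma\min_\tau$ (player 1) resp. $\min_\tau\max_\sigma$ (player 2) of the payoff; minima/maxima over $\tau(l)$ or $\sigma(k)$ are over strategies of a player of the given type. Dual games: $\tilde\Gamma^1_\lambda(\mu,q)$ ($\mu\in\mathbb R^{|K|}$): player 1 chooses his type $k$ himself (hidden), $l\sim q$ drawn by nature and told to player 2, payoff $\mathbb E[\mu^k+\sum_{t\ge1}\lambda(1-\lambda)^{t-1}M]$, value $\tilde V^1_\lambda(\mu,q)$. $\tilde\Gamma^2_\lambda(p,\nu)$ ($\nu\in\mathbb R^{|L|}$): $k\sim p$ by nature, told to player 1; player 2 chooses $l$ himself; payoff $\mathbb E[\nu^l+\sum_{t\ge1}\lambda(1-\lambda)^{t-1}M]$, value $\tilde V^2_\lambda(p,\nu)$. *)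

theory Defs
  imports "HOL-Probability.Probability_Mass_Function"
begin

text \<open>Histories are lists of publicly announced action pairs. A behavior strategy of a
player of a fixed type maps histories to mixed actions.\<close>

type_synonym ('a,'b) hist = "('a \<times> 'b) list"
type_synonym ('a,'b) strat1 = "('a,'b) hist \<Rightarrow> 'a pmf"
type_synonym ('a,'b) strat2 = "('a,'b) hist \<Rightarrow> 'b pmf"

definition prob_simplex :: "('i::finite \<Rightarrow> real) set" where
  "prob_simplex = {x. (\<forall>i. 0 \<le> x i) \<and> sum x UNIV = 1}"

primrec hist_dist :: "('a,'b) strat1 \<Rightarrow> ('a,'b) strat2 \<Rightarrow> nat \<Rightarrow> ('a,'b) hist pmf" where
  "hist_dist s t 0 = return_pmf []"
| "hist_dist s t (Suc n) =
     bind_pmf (hist_dist s t n) (\<lambda>h. map_pmf (\<lambda>ab. h @ [ab]) (pair_pmf (s h) (t h)))"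

text \<open>Expected payoff at stage n+1 for fixed types k, l.\<close>
definition stage_pay :: "('k \<Rightarrow> 'l \<Rightarrow> 'a \<Rightarrow> 'b \<Rightarrow> real) \<Rightarrow> 'k \<Rightarrow> 'l
    \<Rightarrow> ('a,'b) strat1 \<Rightarrow> ('a,'b) strat2 \<Rightarrow> nat \<Rightarrow> real" where
  "stage_pay M k l s t n =
     measure_pmf.expectation (hist_dist s t n)
       (\<lambda>h. measure_pmf.expectation (pair_pmf (s h) (t h)) (\<lambda>(a,b). M k l a b))"

definition disc_pay :: "real \<Rightarrow> ('k \<Rightarrow> 'l \<Rightarrow> 'a \<Rightarrow> 'b \<Rightarrow> real) \<Rightarrow> 'k \<Rightarrow> 'l
    \<Rightarrow> ('a,'b) strat1 \<Rightarrow> ('a,'b) strat2 \<Rightarrow> real" where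
  "disc_pay lam M k l s t = (\<Sum>n. lam * (1 - lam) ^ n * stage_pay M k l s t n)"

definition gamma_pay :: "real \<Rightarrow> ('k::finite \<Rightarrow> 'l::finite \<Rightarrow> 'a \<Rightarrow> 'b \<Rightarrow> real)
    \<Rightarrow> ('k \<Rightarrow> real) \<Rightarrow> ('l \<Rightarrow> real)
    \<Rightarrow> ('k \<Rightarrow> ('a,'b) strat1) \<Rightarrow> ('l \<Rightarrow> ('a,'b) strat2) \<Rightarrow> real" where
  "gamma_pay lam M p q \<sigma> \<tau> = (\<Sum>k\<in>UNIV. \<Sum>l\<in>UNIV. p k * q l * disc_pay lam M k l (\<sigma> k) (\<tau> l))"

definition security1 where
  "security1 lam M p q \<sigma>s \<longleftrightarrow>
     (INF \<tau>. gamma_pay lam M p q \<sigma>s \<tau>) = (SUP \<sigma>. INF \<tau>. gamma_pay lam M p q \<sigma> \<tau>)"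

definition security2 where
  "security2 lam M p q \<tau>s \<longleftrightarrow>
     (SUP \<sigma>. gamma_pay lam M p q \<sigma> \<tau>s) = (INF \<tau>. SUP \<sigma>. gamma_pay lam M p q \<sigma> \<tau>)"

text \<open>u_{l,0;lam}(sigma) = min over strategies of player 2 of type l of the conditional
  expected payoff given l (k ~ p independent of l).\<close>
definition u_val :: "real \<Rightarrow> ('k::finite \<Rightarrow> 'l \<Rightarrow> 'a \<Rightarrow> 'b \<Rightarrow> real) \<Rightarrow> ('k \<Rightarrow> real)
    \<Rightarrow> ('k \<Rightarrow> ('a,'b) strat1) \<Rightarrow> 'l \<Rightarrow> real" where
  "u_val lam M p \<sigma> l = (INF t. \<Sum>k\<in>UNIV. p k * disc_pay lam M k l (\<sigma> k) t)"

text \<open>w_{k,0;lam}(tau) = max over strategies of player 1 of type k of the conditional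
  expected payoff given k (l ~ q independent of k).\<close>
definition w_val :: "real \<Rightarrow> ('k \<Rightarrow> 'l::finite \<Rightarrow> 'a \<Rightarrow> 'b \<Rightarrow> real) \<Rightarrow> ('l \<Rightarrow> real)
    \<Rightarrow> ('l \<Rightarrow> ('a,'b) strat2) \<Rightarrow> 'k \<Rightarrow> real" where
  "w_val lam M q \<tau> k = (SUP s. \<Sum>l\<in>UNIV. q l * disc_pay lam M k l s (\<tau> l))"

text \<open>Dual game 1: player 1 picks his (hidden) type k with a mixed choice pi, and a
  behavior strategy sigma; l ~ q told to player 2. Value taken as sup-inf.\<close>
definition V1_dual :: "real \<Rightarrow> ('k::finite \<Rightarrow> 'l::finite \<Rightarrow> 'a \<Rightarrow> 'b \<Rightarrow> real)
    \<Rightarrow> ('k \<Rightarrow> real) \<Rightarrow> ('l \<Rightarrow> real) \<Rightarrow> real" where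
  "V1_dual lam M \<mu> q =
     (SUP \<pi>\<in>prob_simplex. SUP \<sigma>. INF \<tau>.
        \<Sum>k\<in>UNIV. \<pi> k * (\<mu> k + (\<Sum>l\<in>UNIV. q l * disc_pay lam M k l (\<sigma> k) (\<tau> l))))"

text \<open>Dual game 2: k ~ p told to player 1; player 2 picks his (hidden) type l with a mixed
  choice rho, and a behavior strategy tau. Value taken as sup-inf.\<close>
definition V2_dual :: "real \<Rightarrow> ('k::finite \<Rightarrow> 'l::finite \<Rightarrow> 'a \<Rightarrow> 'b \<Rightarrow> real)
    \<Rightarrow> ('k \<Rightarrow> real) \<Rightarrow> ('l \<Rightarrow> real) \<Rightarrow> real" where
  "V2_dual lam M p \<nu> =
     (SUP \<sigma>. INF \<rho>\<in>prob_simplex. INF \<tau>.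
        \<Sum>k\<in>UNIV. p k * (\<Sum>l\<in>UNIV. \<rho> l * (\<nu> l + disc_pay lam M k l (\<sigma> k) (\<tau> l))))"

end

theory Submission
  imports Defs "HOL-Library.FuncSet"
begin

text \<open>Write \<open>G\<close> for the payoff of \<open>\<Gamma>\<^sub>\<lambda>(p,q)\<close>, \<open>\<underline>v\<close> = \<open>sup\<^sub>\<sigma> inf\<^sub>\<tau> G\<close> and
  \<open>\<overline>v\<close> = \<open>inf\<^sub>\<tau> sup\<^sub>\<sigma> G\<close>. Both claims follow from the chains
  \<open>V\<^sup>1(-w) + p\<cdot>w \<le> 0 + sup\<^sub>\<sigma> G(\<sigma>,\<tau>\<^sup>*) = \<overline>v \<le> \<underline>v \<le> V\<^sup>1(\<mu>) - p\<cdot>\<mu>\<close> and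
  \<open>V\<^sup>2(\<nu>) - q\<cdot>\<nu> \<le> \<underline>v = inf\<^sub>\<tau> G(\<sigma>\<^sup>*,\<tau>) \<le> q\<cdot>u \<le> V\<^sup>2(-u) + q\<cdot>u\<close>,
  whose steps are elementary except \<open>\<overline>v \<le> \<underline>v\<close>: the discounted game has a value. Cutting
  the game off after \<open>N\<close> stages changes every payoff by at most \<open>(1-\<lambda>)\<^sup>N max |M|\<close>. In the
  truncated game the payoff is affine in every single decision, so each behavior strategy is
  dominated by a pure one, and by Kuhn's theorem each mixture of pure strategies is realized by a
  behavior strategy; hence the truncated game is a finite matrix game and von Neumann's minimax
  theorem applies.\<close>

section \<open>The minimax theorem for matrix games\<close>

definition simplex_on :: "'x set \<Rightarrow> ('x \<Rightarrow> real) set" where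
  "simplex_on X = {x. (\<forall>i\<in>X. 0 \<le> x i) \<and> sum x X = 1}"

lemma simplex_on_nonempty:
  assumes "finite X" "X \<noteq> {}"
  shows "simplex_on X \<noteq> {}"
proof -
  obtain i0 where "i0 \<in> X" using assms(2) by blast
  then have "(\<lambda>i. if i = i0 then 1 else 0) \<in> simplex_on X"
    using assms(1) by (simp add: simplex_on_def)
  then show ?thesis by blast
qed

lemma simplex_on_convex_comb:
  "x \<in> simplex_on X \<Longrightarrow> y \<in> simplex_on X \<Longrightarrow> 0 \<le> t \<Longrightarrow> t \<le> 1 \<Longrightarrow>
   (\<lambda>i. t * x i + (1 - t) * y i) \<in> simplex_on X"
  unfolding simplex_on_def by (auto simp: sum.distrib simp flip: sum_distrib_left)

lemma simplex_on_extend_zero: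
  assumes "x \<in> simplex_on (X - {i})" "finite X"
  shows "x(i := 0) \<in> simplex_on X"
proof -
  have "sum (x(i := 0)) X = sum x (X - {i})"
    using assms(2) by (cases "i \<in> X") (auto simp: sum.remove intro!: sum.cong)
  then show ?thesis using assms(1) unfolding simplex_on_def by auto
qed

lemma convex_sum_le:
  assumes "x \<in> simplex_on I" "\<And>i. i \<in> I \<Longrightarrow> c i \<le> (K::real)"
  shows "(\<Sum>i\<in>I. x i * c i) \<le> K"
proof -
  have "(\<Sum>i\<in>I. x i * c i) \<le> (\<Sum>i\<in>I. x i * K)"
    using assms by (intro sum_mono mult_left_mono) (auto simp: simplex_on_def)
  also have "\<dots> = K" using assms(1) by (simp add: simplex_on_def flip: sum_distrib_right)
  finally show ?thesis .
qed

lemma convex_sum_abs_le: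
  assumes "x \<in> simplex_on I" "\<And>i. i \<in> I \<Longrightarrow> \<bar>c i\<bar> \<le> (K::real)"
  shows "\<bar>\<Sum>i\<in>I. x i * c i\<bar> \<le> K"
  using convex_sum_bound_le[of I x c 0 K] assms by (auto simp: simplex_on_def mult.commute)

definition mixed_pay :: "'x set \<Rightarrow> ('x \<Rightarrow> 'y \<Rightarrow> real) \<Rightarrow> ('x \<Rightarrow> real) \<Rightarrow> 'y \<Rightarrow> real" where
  "mixed_pay X A x j = (\<Sum>i\<in>X. x i * A i j)"

definition guaranteed :: "'x set \<Rightarrow> 'y set \<Rightarrow> ('x \<Rightarrow> 'y \<Rightarrow> real) \<Rightarrow> ('x \<Rightarrow> real) \<Rightarrow> real" where
  "guaranteed X Y A x = Min (mixed_pay X A x ` Y)"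

definition maxmin :: "'x set \<Rightarrow> 'y set \<Rightarrow> ('x \<Rightarrow> 'y \<Rightarrow> real) \<Rightarrow> real" where
  "maxmin X Y A = (SUP x\<in>simplex_on X. guaranteed X Y A x)"

text \<open>The same matrix game seen by the column player, who becomes the maximizer. The minimax
  theorem then reads \<open>0 \<le> maxmin X Y A + maxmin Y X (opponent_view A)\<close>, a statement invariant
  under exchanging the players, so that every argument is needed for one player only.\<close>

definition opponent_view :: "('x \<Rightarrow> 'y \<Rightarrow> real) \<Rightarrow> 'y \<Rightarrow> 'x \<Rightarrow> real" where
  "opponent_view A j i = - A i j"

lemma opponent_view_opponent_view [simp]: "opponent_view (opponent_view A) = A"
  by (simp add: opponent_view_def fun_eq_iff)

lemma mixed_pay_convex_comb:
  "mixed_pay X A (\<lambda>i. t * x i + (1 - t) * y i) j = t * mixed_pay X A x j + (1 - t) * mixed_pay X A y j"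
  unfolding mixed_pay_def sum_distrib_left sum.distrib[symmetric]
  by (rule sum.cong) (simp_all add: algebra_simps)

lemma mixed_pay_extend_zero:
  "finite X \<Longrightarrow> mixed_pay X A (x(i := 0)) j = mixed_pay (X - {i}) A x j"
  unfolding mixed_pay_def by (cases "i \<in> X") (auto simp: sum.remove intro!: sum.cong)

lemma sum_mixed_pay_opponent_view:
  "(\<Sum>j\<in>Y. y j * mixed_pay X A x j) = - (\<Sum>i\<in>X. x i * mixed_pay Y (opponent_view A) y i)"
  unfolding mixed_pay_def opponent_view_def
  by (simp add: sum_distrib_left sum_negf mult_ac sum.swap[of _ Y])

context
  fixes X :: "'x set" and Y :: "'y set"
  assumes fin: "finite X" "finite Y" and ne: "X \<noteq> {}" "Y \<noteq> {}"
begin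

lemma guaranteed_le: "j \<in> Y \<Longrightarrow> guaranteed X Y A x \<le> mixed_pay X A x j"
  unfolding guaranteed_def using fin by simp

lemma less_guaranteed_iff: "c < guaranteed X Y A x \<longleftrightarrow> (\<forall>j\<in>Y. c < mixed_pay X A x j)"
  unfolding guaranteed_def using fin ne by simp

lemma guaranteed_abs_le:
  assumes "x \<in> simplex_on X" "\<forall>i\<in>X. \<forall>j\<in>Y. \<bar>A i j\<bar> \<le> B"
  shows "\<bar>guaranteed X Y A x\<bar> \<le> B"
proof -
  have "guaranteed X Y A x \<in> mixed_pay X A x ` Y"
    unfolding guaranteed_def using fin ne by (intro Min_in) auto
  then show ?thesis
    using assms unfolding mixed_pay_def by (auto intro!: convex_sum_abs_le)
qed

lemma entry_abs_le_sum:
  fixes A :: "'x \<Rightarrow> 'y \<Rightarrow> real"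
  shows "\<forall>i\<in>X. \<forall>j\<in>Y. \<bar>A i j\<bar> \<le> (\<Sum>i\<in>X. \<Sum>j\<in>Y. \<bar>A i j\<bar>)"
proof (intro ballI)
  fix i j assume "i \<in> X" "j \<in> Y"
  have "\<bar>A i j\<bar> \<le> (\<Sum>j\<in>Y. \<bar>A i j\<bar>)"
    by (rule member_le_sum[of j Y "\<lambda>j. \<bar>A i j\<bar>"]) (use fin \<open>j \<in> Y\<close> in auto)
  also have "\<dots> \<le> (\<Sum>i\<in>X. \<Sum>j\<in>Y. \<bar>A i j\<bar>)"
    by (rule member_le_sum[of i X "\<lambda>i. \<Sum>j\<in>Y. \<bar>A i j\<bar>"]) (use fin \<open>i \<in> X\<close> in \<open>auto intro: sum_nonneg\<close>)
  finally show "\<bar>A i j\<bar> \<le> (\<Sum>i\<in>X. \<Sum>j\<in>Y. \<bar>A i j\<bar>)" .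
qed

lemma bdd_above_guaranteed: "bdd_above (guaranteed X Y A ` simplex_on X)"
  by (rule bdd_aboveI2) (use guaranteed_abs_le[OF _ entry_abs_le_sum] abs_le_D1 in blast)

lemma guaranteed_le_maxmin: "x \<in> simplex_on X \<Longrightarrow> guaranteed X Y A x \<le> maxmin X Y A"
  unfolding maxmin_def by (rule cSUP_upper[OF _ bdd_above_guaranteed])

lemma less_maxmin_iff: "c < maxmin X Y A \<longleftrightarrow> (\<exists>x\<in>simplex_on X. c < guaranteed X Y A x)"
  unfolding maxmin_def using less_cSUP_iff[OF simplex_on_nonempty[OF fin(1) ne(1)] bdd_above_guaranteed] .

end

lemma maxmin_remove_le:
  assumes "finite X" "finite Y" "X - {i} \<noteq> {}" "Y \<noteq> {}"
  shows "maxmin (X - {i}) Y A \<le> maxmin X Y A"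
  unfolding maxmin_def[of "X - {i}"]
proof (rule cSUP_least)
  show "simplex_on (X - {i}) \<noteq> {}" using assms by (intro simplex_on_nonempty) auto
  fix x assume x: "x \<in> simplex_on (X - {i})"
  have "guaranteed (X - {i}) Y A x = guaranteed X Y A (x(i := 0))"
    unfolding guaranteed_def using assms(1) by (simp add: mixed_pay_extend_zero)
  also have "\<dots> \<le> maxmin X Y A"
    using assms by (intro guaranteed_le_maxmin simplex_on_extend_zero x) auto
  finally show "guaranteed (X - {i}) Y A x \<le> maxmin X Y A" .
qed

lemma mixed_pay_bounds_sum_nonneg:
  assumes x: "x \<in> simplex_on X" and y: "y \<in> simplex_on Y"
    and "\<forall>j\<in>Y. mixed_pay X A x j \<le> c" "\<forall>i\<in>X. mixed_pay Y (opponent_view A) y i \<le> c'"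
  shows "0 \<le> c + c'"
proof -
  have "(\<Sum>j\<in>Y. y j * mixed_pay X A x j) \<le> c"
    by (rule convex_sum_le[OF y]) (use assms(3) in auto)
  moreover have "(\<Sum>i\<in>X. x i * mixed_pay Y (opponent_view A) y i) \<le> c'"
    by (rule convex_sum_le[OF x]) (use assms(4) in auto)
  ultimately show ?thesis
    using sum_mixed_pay_opponent_view[of y X A x Y] by linarith
qed

lemma convex_comb_above:
  fixes u w :: "'y \<Rightarrow> real"
  assumes "0 < \<delta>" "0 < t" "0 \<le> B" "t * (\<bar>a\<bar> + B + \<delta>) \<le> \<delta> / 6"
    and u: "\<forall>j\<in>Y. a - t * \<delta> / 4 < u j" "a + \<delta> / 3 < u j0"
    and w: "\<forall>j\<in>Y - {j0}. a + \<delta> / 2 < w j" "- B \<le> w j0"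
  shows "\<forall>j\<in>Y. a < t * w j + (1 - t) * u j"
proof
  fix j assume "j \<in> Y"
  have expand: "t * (\<bar>a\<bar> + B + \<delta>) = t * \<bar>a\<bar> + t * B + t * \<delta>"
    by (simp add: algebra_simps)
  have "0 \<le> t * \<bar>a\<bar>" "0 \<le> t * B" "0 < t * \<delta>"
    using assms(1-3) by simp_all
  then have "t * \<delta> < \<delta>" using assms(1,4) expand by linarith
  then have t1: "t < 1" using assms(1) by (simp add: mult_less_cancel_right2)
  show "a < t * w j + (1 - t) * u j"
  proof (cases "j = j0")
    case True
    have "- (t * B) \<le> t * w j" using mult_left_mono[OF w(2), of t] True assms(2) by simp
    moreover have "(1 - t) * (a + \<delta> / 3) \<le> (1 - t) * u j"
      using u(2) True t1 by (intro mult_left_mono) auto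
    moreover have "(1 - t) * (a + \<delta> / 3) = a + \<delta> / 3 - t * a - t * \<delta> / 3"
      by (simp add: field_simps)
    moreover have "t * a \<le> t * \<bar>a\<bar>" using assms(2) by (simp add: mult_left_mono)
    ultimately show ?thesis
      using assms(1,4) expand \<open>0 < t * \<delta>\<close> by linarith
  next
    case False
    have "a + \<delta> / 2 < w j" using w(1) False \<open>j \<in> Y\<close> by blast
    then have "t * (a + \<delta> / 2) \<le> t * w j"
      using assms(2) by (intro mult_left_mono) auto
    moreover have "(1 - t) * (a - t * \<delta> / 4) \<le> (1 - t) * u j"
      using u(1) \<open>j \<in> Y\<close> t1 by (intro mult_left_mono) auto
    moreover have "t * (a + \<delta> / 2) + (1 - t) * (a - t * \<delta> / 4) = a + t * \<delta> / 4 + t * (t * \<delta>) / 4"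
      by (simp add: field_simps)
    moreover have "0 < t * (t * \<delta>)" using assms(1,2) by simp
    ultimately show ?thesis
      using \<open>0 < t * \<delta>\<close> by linarith
  qed
qed

lemma guaranteed_convex_comb_gt:
  assumes fin: "finite X" "finite Y" and ne: "X \<noteq> {}" and "j0 \<in> Y"
    and "0 < \<delta>" "0 < t" "0 \<le> B" "t * (\<bar>a\<bar> + B + \<delta>) \<le> \<delta> / 6"
    and B: "\<forall>i\<in>X. \<forall>j\<in>Y. \<bar>A i j\<bar> \<le> B"
    and x0: "x0 \<in> simplex_on X" "a - t * \<delta> / 4 < guaranteed X Y A x0" "a + \<delta> / 3 < mixed_pay X A x0 j0"
    and x': "x' \<in> simplex_on X" "\<forall>j\<in>Y - {j0}. a + \<delta> / 2 < mixed_pay X A x' j"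
  shows "a < guaranteed X Y A (\<lambda>i. t * x' i + (1 - t) * x0 i)"
proof -
  have ne_Y: "Y \<noteq> {}" using \<open>j0 \<in> Y\<close> by blast
  have "- B \<le> mixed_pay X A x' j0"
    using convex_sum_abs_le[OF x'(1), of "\<lambda>i. A i j0" B] B \<open>j0 \<in> Y\<close>
    unfolding mixed_pay_def by (simp add: abs_le_iff)
  moreover have "\<forall>j\<in>Y. a - t * \<delta> / 4 < mixed_pay X A x0 j"
    using x0(2) less_guaranteed_iff[OF fin ne ne_Y] by simp
  ultimately have "\<forall>j\<in>Y. a < t * mixed_pay X A x' j + (1 - t) * mixed_pay X A x0 j"
    using convex_comb_above[of \<delta> t B a Y "mixed_pay X A x0" j0 "mixed_pay X A x'"] assms(5-8) x0(3) x'(2)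
    by blast
  then show ?thesis
    unfolding less_guaranteed_iff[OF fin ne ne_Y] mixed_pay_convex_comb .
qed

text \<open>If a nearly optimal \<open>x0\<close> does strictly better than \<open>maxmin X Y A\<close> against the column
  \<open>j0\<close>, then mixing a little of a nearly optimal strategy of the game without \<open>j0\<close> into \<open>x0\<close> would
  beat \<open>maxmin X Y A\<close> against every column, unless the game without \<open>j0\<close> has a gap as well.\<close>
lemma maxmin_gap_column_step:
  assumes fin: "finite X" "finite Y" and ne: "X \<noteq> {}" and "j0 \<in> Y"
    and IH: "\<And>Y'. Y' \<subset> Y \<Longrightarrow> Y' \<noteq> {} \<Longrightarrow> 0 \<le> maxmin X Y' A + maxmin Y' X (opponent_view A)"
    and "0 < \<delta>" "0 < t" "0 \<le> B" "t * (\<bar>maxmin X Y A\<bar> + B + \<delta>) \<le> \<delta> / 6"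
    and B: "\<forall>i\<in>X. \<forall>j\<in>Y. \<bar>A i j\<bar> \<le> B"
    and x0: "x0 \<in> simplex_on X" "maxmin X Y A - t * \<delta> / 4 < guaranteed X Y A x0"
      "maxmin X Y A + \<delta> / 3 < mixed_pay X A x0 j0"
  shows "- \<delta> < maxmin X Y A + maxmin Y X (opponent_view A)"
proof (rule ccontr)
  define a where "a = maxmin X Y A"
  assume "\<not> ?thesis"
  then have gap: "maxmin Y X (opponent_view A) \<le> - a - \<delta>" by (simp add: a_def)
  obtain x' where x': "x' \<in> simplex_on X" "\<forall>j\<in>Y - {j0}. a + \<delta> / 2 < mixed_pay X A x' j"
  proof (cases "Y - {j0} = {}")
    case True
    then show ?thesis using that x0(1) by blast
  next
    case False
    have "Y - {j0} \<subset> Y" using \<open>j0 \<in> Y\<close> by blast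
    then have "a + \<delta> / 2 < maxmin X (Y - {j0}) A"
      using IH[OF _ False] maxmin_remove_le[OF fin(2,1) False ne, of "opponent_view A"] gap \<open>0 < \<delta>\<close>
      by linarith
    then show ?thesis
      using that less_maxmin_iff[OF fin(1) _ ne False] less_guaranteed_iff[OF fin(1) _ ne False] fin(2)
      by blast
  qed
  have "x \<in> simplex_on X \<Longrightarrow> guaranteed X Y A x \<le> a" for x
    unfolding a_def using \<open>j0 \<in> Y\<close> by (intro guaranteed_le_maxmin[OF fin ne]) auto
  moreover have "(\<lambda>i. t * x' i + (1 - t) * x0 i) \<in> simplex_on X"
  proof -
    have "t * \<delta> \<le> t * (\<bar>maxmin X Y A\<bar> + B + \<delta>)"
      using assms(7,8) by (intro mult_left_mono) auto
    then have "t * \<delta> < \<delta>" using assms(6,9) by linarith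
    then have "t \<le> 1" using assms(6) by (simp add: mult_less_cancel_right2)
    then show ?thesis using assms(7) by (intro simplex_on_convex_comb x'(1) x0(1)) auto
  qed
  moreover have "a < guaranteed X Y A (\<lambda>i. t * x' i + (1 - t) * x0 i)"
    by (rule guaranteed_convex_comb_gt[OF fin ne \<open>j0 \<in> Y\<close> assms(6-8) _ B _ _ _ x'])
      (use assms(9) x0 in \<open>simp_all add: a_def\<close>)
  ultimately show False by fastforce
qed

lemma maxmin_opponent_view_nonneg_step:
  assumes fin: "finite X" "finite Y" and ne: "X \<noteq> {}" "Y \<noteq> {}"
    and IH_col: "\<And>Y'. Y' \<subset> Y \<Longrightarrow> Y' \<noteq> {} \<Longrightarrow> 0 \<le> maxmin X Y' A + maxmin Y' X (opponent_view A)"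
    and IH_row: "\<And>X'. X' \<subset> X \<Longrightarrow> X' \<noteq> {} \<Longrightarrow>
      0 \<le> maxmin Y X' (opponent_view A) + maxmin X' Y (opponent_view (opponent_view A))"
  shows "0 \<le> maxmin X Y A + maxmin Y X (opponent_view A)"
proof (rule ccontr)
  define a where "a = maxmin X Y A"
  define a' where "a' = maxmin Y X (opponent_view A)"
  define \<delta> where "\<delta> = - (a + a')"
  assume "\<not> ?thesis"
  then have "0 < \<delta>" by (simp add: \<delta>_def a_def a'_def)
  define B where "B = (\<Sum>i\<in>X. \<Sum>j\<in>Y. \<bar>A i j\<bar>)"
  have B: "\<forall>i\<in>X. \<forall>j\<in>Y. \<bar>A i j\<bar> \<le> B" "\<forall>j\<in>Y. \<forall>i\<in>X. \<bar>opponent_view A j i\<bar> \<le> B" "0 \<le> B"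
    using entry_abs_le_sum[OF fin ne, of A] unfolding B_def opponent_view_def
    by (auto intro: sum_nonneg)
  define t where "t = \<delta> / (6 * (\<bar>a\<bar> + \<bar>a'\<bar> + B + \<delta>))"
  have t: "0 < t" "t * (\<bar>a\<bar> + B + \<delta>) \<le> \<delta> / 6" "t * (\<bar>a'\<bar> + B + \<delta>) \<le> \<delta> / 6"
    using \<open>0 < \<delta>\<close> B(3) by (auto simp: t_def field_simps)
  then have "a - t * \<delta> / 4 < maxmin X Y A" "a' - t * \<delta> / 4 < maxmin Y X (opponent_view A)"
    using \<open>0 < \<delta>\<close> by (simp_all add: a_def a'_def)
  then obtain x0 y0 where
    x0: "x0 \<in> simplex_on X" "a - t * \<delta> / 4 < guaranteed X Y A x0" and
    y0: "y0 \<in> simplex_on Y" "a' - t * \<delta> / 4 < guaranteed Y X (opponent_view A) y0"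
    unfolding less_maxmin_iff[OF fin ne] less_maxmin_iff[OF fin(2,1) ne(2,1)] by blast
  consider (col) j0 where "j0 \<in> Y" "a + \<delta> / 3 < mixed_pay X A x0 j0"
    | (row) i0 where "i0 \<in> X" "a' + \<delta> / 3 < mixed_pay Y (opponent_view A) y0 i0"
    | (none) "\<forall>j\<in>Y. mixed_pay X A x0 j \<le> a + \<delta> / 3"
        "\<forall>i\<in>X. mixed_pay Y (opponent_view A) y0 i \<le> a' + \<delta> / 3"
    by (meson not_le)
  then show False
  proof cases
    case col
    have "- \<delta> < a + a'"
      unfolding a_def a'_def
      by (rule maxmin_gap_column_step[OF fin ne(1) col(1) IH_col \<open>0 < \<delta>\<close> t(1) B(3)])
        (use t(2) B(1) x0 col(2) in \<open>simp_all add: a_def\<close>)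
    then show False by (simp add: \<delta>_def)
  next
    case row
    have "- \<delta> < a' + maxmin X Y (opponent_view (opponent_view A))"
      unfolding a'_def
      by (rule maxmin_gap_column_step[OF fin(2,1) ne(2) row(1) IH_row \<open>0 < \<delta>\<close> t(1) B(3)])
        (use t(3) B(2) y0 row(2) in \<open>simp_all add: a'_def\<close>)
    then show False by (simp add: \<delta>_def a_def)
  next
    case none
    from mixed_pay_bounds_sum_nonneg[OF x0(1) y0(1) none] show False
      using \<open>0 < \<delta>\<close> \<delta>_def by linarith
  qed
qed

theorem maxmin_opponent_view_nonneg:
  assumes "finite X" "finite Y" "X \<noteq> {}" "Y \<noteq> {}"
  shows "0 \<le> maxmin X Y A + maxmin Y X (opponent_view A)"
  using assms
proof (induction "card X + card Y" arbitrary: X Y A rule: less_induct)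
  case less
  show ?case
  proof (rule maxmin_opponent_view_nonneg_step[OF less.prems])
    show "0 \<le> maxmin X Y' A + maxmin Y' X (opponent_view A)" if "Y' \<subset> Y" "Y' \<noteq> {}" for Y'
      using less.hyps[of X Y'] less.prems that psubset_card_mono[OF less.prems(2) that(1)]
      by (auto intro: finite_subset)
    show "0 \<le> maxmin Y X' (opponent_view A) + maxmin X' Y (opponent_view (opponent_view A))"
      if "X' \<subset> X" "X' \<noteq> {}" for X'
      using less.hyps[of X' Y A] less.prems that psubset_card_mono[OF less.prems(1) that(1)]
      by (auto intro: finite_subset simp: add.commute)
  qed
qed

corollary minimax_approx_saddle:
  assumes "finite X" "finite Y" "X \<noteq> {}" "Y \<noteq> {}" "0 < d"
  shows "\<exists>x\<in>simplex_on X. \<exists>y\<in>simplex_on Y. \<forall>i\<in>X. \<forall>j\<in>Y.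
           (\<Sum>j'\<in>Y. y j' * A i j') \<le> (\<Sum>i'\<in>X. x i' * A i' j) + d"
proof -
  have "maxmin X Y A - d / 2 < maxmin X Y A"
    "maxmin Y X (opponent_view A) - d / 2 < maxmin Y X (opponent_view A)"
    using assms(5) by simp_all
  then obtain x y where
    x: "x \<in> simplex_on X" "maxmin X Y A - d / 2 < guaranteed X Y A x" and
    y: "y \<in> simplex_on Y" "maxmin Y X (opponent_view A) - d / 2 < guaranteed Y X (opponent_view A) y"
    unfolding less_maxmin_iff[OF assms(1-4)] less_maxmin_iff[OF assms(2,1,4,3)] by blast
  have "(\<Sum>j'\<in>Y. y j' * A i j') \<le> (\<Sum>i'\<in>X. x i' * A i' j) + d" if "i \<in> X" "j \<in> Y" for i j
  proof -
    have "(\<Sum>j'\<in>Y. y j' * A i j') = - mixed_pay Y (opponent_view A) y i"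
      by (simp add: mixed_pay_def opponent_view_def sum_negf)
    moreover have "guaranteed Y X (opponent_view A) y \<le> mixed_pay Y (opponent_view A) y i"
      using guaranteed_le[OF assms(2,1,4,3) that(1)] .
    moreover have "guaranteed X Y A x \<le> (\<Sum>i'\<in>X. x i' * A i' j)"
      using guaranteed_le[OF assms(1-4) that(2)] by (simp add: mixed_pay_def)
    ultimately show ?thesis
      using x(2) y(2) maxmin_opponent_view_nonneg[OF assms(1-4), of A] by linarith
  qed
  then show ?thesis using x(1) y(1) by blast
qed

section \<open>Realization plans and Kuhn's theorem\<close>

text \<open>The realization plan of a behavior strategy \<open>s\<close>: the probability that \<open>s\<close> chooses the own
  components (selected by \<open>own\<close>) of the history \<open>h\<close>, given the opponent's components.\<close>

definition realization :: "('c \<Rightarrow> 'x) \<Rightarrow> ('c list \<Rightarrow> 'x pmf) \<Rightarrow> 'c list \<Rightarrow> real" where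
  "realization own s h = (\<Prod>i<length h. pmf (s (take i h)) (own (h ! i)))"

lemma realization_Nil [simp]: "realization own s [] = 1"
  by (simp add: realization_def)

lemma realization_snoc: "realization own s (h @ [x]) = realization own s h * pmf (s h) (own x)"
proof -
  have "realization own s (h @ [x]) =
      (\<Prod>i<length h. pmf (s (take i (h @ [x]))) (own ((h @ [x]) ! i))) * pmf (s h) (own x)"
    by (simp add: realization_def prod.lessThan_Suc)
  also have "(\<Prod>i<length h. pmf (s (take i (h @ [x]))) (own ((h @ [x]) ! i))) = realization own s h"
    unfolding realization_def by (rule prod.cong) (auto simp: nth_append)
  finally show ?thesis .
qed

lemma realization_nonneg: "0 \<le> realization own s h"
  by (simp add: realization_def prod_nonneg)

lemma realization_cong:
  "(\<And>i. i < length h \<Longrightarrow> s (take i h) = s' (take i h)) \<Longrightarrow> realization own s h = realization own s' h"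
  unfolding realization_def by (rule prod.cong) auto

lemma pmf_hist_dist:
  "pmf (hist_dist s t n) h = (if length h = n then realization fst s h * realization snd t h else 0)"
proof (induction n arbitrary: h)
  case 0
  then show ?case by (auto simp: pmf_return)
next
  case (Suc n)
  define F where "F = (\<lambda>h'. map_pmf (\<lambda>ab. h' @ [ab]) (pair_pmf (s h') (t h')))"
  have unfold: "hist_dist s t (Suc n) = bind_pmf (hist_dist s t n) F"
    by (simp add: F_def)
  show ?case
  proof (cases h rule: rev_exhaust)
    case Nil
    have "pmf (F h') [] = 0" for h'
      by (auto simp: F_def pmf_eq_0_set_pmf)
    then show ?thesis using Nil unfolding unfold pmf_bind by simp
  next
    case (snoc h0 x)
    have inj: "inj (\<lambda>ab. h' @ [ab])" for h' :: "('a \<times> 'b) list"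
      by (auto simp: inj_def)
    have F: "pmf (F h') h = (if h' = h0 then pmf (s h0) (fst x) * pmf (t h0) (snd x) else 0)" for h'
    proof (cases "h' = h0")
      case True
      then show ?thesis using snoc by (cases x) (simp add: F_def pmf_map_inj'[OF inj] pmf_pair)
    next
      case False
      then show ?thesis using snoc by (auto simp: F_def pmf_eq_0_set_pmf)
    qed
    have "pmf (hist_dist s t (Suc n)) h = (\<integral>h'. pmf (F h') h \<partial>measure_pmf (hist_dist s t n))"
      unfolding unfold pmf_bind by simp
    also have "\<dots> = (\<Sum>h'\<in>{h0}. pmf (F h') h * pmf (hist_dist s t n) h')"
      by (rule integral_measure_pmf_real) (auto simp: F split: if_splits)
    also have "\<dots> = (if length h = Suc n then realization fst s h * realization snd t h else 0)"
      using snoc F[of h0] by (simp add: Suc.IH realization_snoc del: One_nat_def)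
    finally show ?thesis .
  qed
qed

lemma length_in_set_hist_dist: "h \<in> set_pmf (hist_dist s t n) \<Longrightarrow> length h = n"
  by (auto simp: set_pmf_eq pmf_hist_dist split: if_splits)

lemma finite_lists_shorter: "finite {h :: 'c::finite list. length h < N}"
  by (rule finite_subset[OF _ finite_lists_length_le[of UNIV N]]) auto

lemma stage_pay_eq_sum:
  fixes M :: "'k \<Rightarrow> 'l \<Rightarrow> 'a::finite \<Rightarrow> 'b::finite \<Rightarrow> real"
  shows "stage_pay M k l s t n = (\<Sum>h | length h = n. \<Sum>x\<in>UNIV.
            realization fst s (h @ [x]) * realization snd t (h @ [x]) * M k l (fst x) (snd x))"
proof -
  have stage: "measure_pmf.expectation (pair_pmf (s h) (t h)) (\<lambda>(a, b). M k l a b)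
     = (\<Sum>x\<in>UNIV. pmf (s h) (fst x) * pmf (t h) (snd x) * M k l (fst x) (snd x))" for h
    by (subst integral_measure_pmf_real[where A=UNIV])
      (auto simp: pmf_pair split: prod.splits intro!: sum.cong)
  have "finite {h :: ('a \<times> 'b) list. length h = n}"
    using finite_lists_length_eq[of "UNIV :: ('a \<times> 'b) set" n] by simp
  then have "stage_pay M k l s t n = (\<Sum>h | length h = n.
      measure_pmf.expectation (pair_pmf (s h) (t h)) (\<lambda>(a, b). M k l a b) * pmf (hist_dist s t n) h)"
    unfolding stage_pay_def by (rule integral_measure_pmf_real) (auto simp: length_in_set_hist_dist)
  also have "\<dots> = (\<Sum>h | length h = n. \<Sum>x\<in>UNIV.
      realization fst s (h @ [x]) * realization snd t (h @ [x]) * M k l (fst x) (snd x))"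
    by (rule sum.cong) (auto simp: stage pmf_hist_dist realization_snoc sum_distrib_right intro!: sum.cong)
  finally show ?thesis .
qed

lemma stage_pay_linear_fst:
  fixes M :: "'k \<Rightarrow> 'l \<Rightarrow> 'a::finite \<Rightarrow> 'b::finite \<Rightarrow> real"
  assumes "\<And>h. realization fst s h = (\<Sum>i\<in>I. w i * realization fst (S i) h)"
  shows "stage_pay M k l s t n = (\<Sum>i\<in>I. w i * stage_pay M k l (S i) t n)"
  unfolding stage_pay_eq_sum assms
  by (simp add: sum_distrib_left sum_distrib_right mult.assoc mult.left_commute sum.swap[of _ I])

lemma stage_pay_linear_snd:
  fixes M :: "'k \<Rightarrow> 'l \<Rightarrow> 'a::finite \<Rightarrow> 'b::finite \<Rightarrow> real"
  assumes "\<And>h. realization snd t h = (\<Sum>i\<in>I. w i * realization snd (T i) h)"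
  shows "stage_pay M k l s t n = (\<Sum>i\<in>I. w i * stage_pay M k l s (T i) n)"
  unfolding stage_pay_eq_sum assms
  by (simp add: sum_distrib_left sum_distrib_right mult.assoc mult.left_commute sum.swap[of _ I])

lemma realization_fun_upd:
  fixes d :: "'x::finite pmf"
  shows "realization own (s(h0 := d)) h = (\<Sum>x\<in>UNIV. pmf d x * realization own (s(h0 := return_pmf x)) h)"
proof (cases "\<exists>i<length h. take i h = h0")
  case False
  then have "realization own (s(h0 := e)) h = realization own s h" for e
    by (intro realization_cong) auto
  then show ?thesis by (simp add: sum_pmf_eq_1 flip: sum_distrib_right)
next
  case True
  then obtain i0 where i0: "i0 < length h" "take i0 h = h0" by blast
  have unique: "take i h = h0 \<longleftrightarrow> i = i0" if "i < length h" for i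
    using i0 that by (metis length_take min.absorb4 min.strict_order_iff)
  define R where "R = (\<Prod>i\<in>{..<length h} - {i0}. pmf (s (take i h)) (own (h ! i)))"
  have factor: "realization own (s(h0 := e)) h = pmf e (own (h ! i0)) * R" for e
  proof -
    have "realization own (s(h0 := e)) h = pmf ((s(h0 := e)) (take i0 h)) (own (h ! i0)) *
        (\<Prod>i\<in>{..<length h} - {i0}. pmf ((s(h0 := e)) (take i h)) (own (h ! i)))"
      unfolding realization_def by (rule prod.remove) (use i0 in auto)
    also have "(\<Prod>i\<in>{..<length h} - {i0}. pmf ((s(h0 := e)) (take i h)) (own (h ! i))) = R"
      unfolding R_def by (rule prod.cong) (use unique in auto)
    also have "pmf ((s(h0 := e)) (take i0 h)) (own (h ! i0)) = pmf e (own (h ! i0))"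
      using i0 by simp
    finally show ?thesis .
  qed
  have "(\<Sum>x\<in>UNIV. pmf d x * realization own (s(h0 := return_pmf x)) h)
      = (\<Sum>x\<in>UNIV. if x = own (h ! i0) then pmf d x * R else 0)"
    by (rule sum.cong) (auto simp: factor pmf_return)
  then show ?thesis by (simp add: factor)
qed

text \<open>Kuhn's theorem in the direction needed here: a mixture of behavior strategies is
  realization-equivalent to a behavior strategy, which randomizes at \<open>h\<close> according to the
  posterior weights of the mixed components given that \<open>h\<close> was reached.\<close>

lemma realization_convex_comb:
  assumes "0 \<le> \<alpha>" "\<alpha> \<le> 1"
  shows "\<exists>s. \<forall>h. realization own s h = \<alpha> * realization own s1 h + (1 - \<alpha>) * realization own s2 h"
proof -
  define D where "D h = \<alpha> * realization own s1 h + (1 - \<alpha>) * realization own s2 h" for h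
  define s where "s = (\<lambda>h. if D h = 0 then s1 h else
     bind_pmf (bernoulli_pmf (\<alpha> * realization own s1 h / D h)) (\<lambda>c. if c then s1 h else s2 h))"
  have nonneg: "0 \<le> \<alpha> * realization own s1 h" "0 \<le> (1 - \<alpha>) * realization own s2 h" for h
    using assms by (auto intro!: mult_nonneg_nonneg realization_nonneg)
  have "realization own s h = D h" for h
  proof (induction h rule: rev_induct)
    case Nil
    then show ?case by (simp add: D_def)
  next
    case (snoc x h)
    show ?case
    proof (cases "D h = 0")
      case True
      then have zero: "\<alpha> * realization own s1 h = 0" "(1 - \<alpha>) * realization own s2 h = 0"
        using nonneg[of h] unfolding D_def by linarith+
      have "D (h @ [x]) = \<alpha> * realization own s1 h * pmf (s1 h) (own x)
          + (1 - \<alpha>) * realization own s2 h * pmf (s2 h) (own x)"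
        by (simp add: D_def realization_snoc mult.assoc)
      also have "\<dots> = 0" unfolding zero by simp
      finally have "D (h @ [x]) = 0" .
      then show ?thesis using snoc.IH True by (simp add: realization_snoc)
    next
      case False
      then have "0 < D h" using nonneg[of h] unfolding D_def by linarith
      define b where "b = \<alpha> * realization own s1 h / D h"
      have b: "0 \<le> b" "b \<le> 1" "D h * b = \<alpha> * realization own s1 h"
        "D h * (1 - b) = (1 - \<alpha>) * realization own s2 h"
        using \<open>0 < D h\<close> nonneg[of h] by (auto simp: b_def D_def field_simps)
      have "s h = bind_pmf (bernoulli_pmf b) (\<lambda>c. if c then s1 h else s2 h)"
        using False by (simp add: s_def b_def)
      then have "realization own s (h @ [x]) = D h * (b * pmf (s1 h) (own x) + (1 - b) * pmf (s2 h) (own x))"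
        using snoc.IH b(1,2) by (simp add: realization_snoc pmf_bind)
      also have "\<dots> = (D h * b) * pmf (s1 h) (own x) + (D h * (1 - b)) * pmf (s2 h) (own x)"
        by (simp add: algebra_simps)
      also have "\<dots> = D (h @ [x])"
        unfolding b(3,4) by (simp add: D_def realization_snoc mult.assoc)
      finally show ?thesis .
    qed
  qed
  then show ?thesis unfolding D_def by blast
qed

lemma realization_mixture:
  assumes "finite I" "w \<in> simplex_on I"
  shows "\<exists>s. \<forall>h. realization own s h = (\<Sum>i\<in>I. w i * realization own (S i) h)"
  using assms
proof (induction I arbitrary: w rule: finite_induct)
  case empty
  then show ?case by (simp add: simplex_on_def)
next
  case (insert i F)
  have w: "0 \<le> w i" "w i \<le> 1" "sum w F = 1 - w i" "\<forall>j\<in>F. 0 \<le> w j"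
    using insert sum_nonneg[of F w] by (auto simp: simplex_on_def)
  show ?case
  proof (cases "w i = 1")
    case True
    then have "\<forall>j\<in>F. w j = 0" using w sum_nonneg_eq_0_iff[OF insert.hyps(1)] by auto
    then show ?thesis using True insert.hyps by (intro exI[of _ "S i"]) simp
  next
    case False
    define w' where "w' j = w j / (1 - w i)" for j
    have "w' \<in> simplex_on F"
      using w False by (auto simp: w'_def simplex_on_def simp flip: sum_divide_distrib)
    then obtain s' where s': "\<forall>h. realization own s' h = (\<Sum>j\<in>F. w' j * realization own (S j) h)"
      using insert.IH by blast
    obtain s where "\<forall>h. realization own s h = w i * realization own (S i) h + (1 - w i) * realization own s' h"
      using realization_convex_comb[OF w(1,2)] by blast
    then have "realization own s h = (\<Sum>j\<in>insert i F. w j * realization own (S j) h)" for h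
      using False insert.hyps by (simp add: s' sum_distrib_left w'_def)
    then show ?thesis by blast
  qed
qed

text \<open>By affinity, at a single history some pure decision is at least as good as any mixed one;
  the decisions on \<open>D\<close> are replaced one at a time.\<close>

lemma exists_pure_improvement:
  fixes \<Phi> :: "('c \<Rightarrow> 'x::finite pmf) \<Rightarrow> real"
  assumes affine: "\<And>s h d. \<Phi> (s(h := d)) = (\<Sum>x\<in>UNIV. pmf d x * \<Phi> (s(h := return_pmf x)))"
    and "finite D"
  shows "\<exists>g. \<Phi> s \<le> \<Phi> (\<lambda>h. if h \<in> D then return_pmf (g h) else s h)"
  using assms(2)
proof (induction D rule: finite_induct)
  case empty
  then show ?case by simp
next
  case (insert h0 D)
  then obtain g where g: "\<Phi> s \<le> \<Phi> (\<lambda>h. if h \<in> D then return_pmf (g h) else s h)" by blast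
  define s1 where "s1 = (\<lambda>h. if h \<in> D then return_pmf (g h) else s h)"
  define f where "f x = \<Phi> (s1(h0 := return_pmf x))" for x
  have "Max (range f) \<in> range f" by (rule Max_in) auto
  then obtain xm where "Max (range f) = f xm" by blast
  moreover have "f x \<le> Max (range f)" for x by (rule Max_ge) auto
  ultimately have xm: "f x \<le> f xm" for x by simp
  have "\<Phi> s1 = \<Phi> (s1(h0 := s1 h0))" by simp
  also have "\<dots> = (\<Sum>x\<in>UNIV. pmf (s1 h0) x * f x)" unfolding f_def by (rule affine)
  also have "\<dots> \<le> (\<Sum>x\<in>UNIV. pmf (s1 h0) x * f xm)"
    by (rule sum_mono) (simp add: xm mult_left_mono)
  also have "\<dots> = f xm"
    by (simp add: sum_pmf_eq_1 flip: sum_distrib_right)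
  finally have "\<Phi> s \<le> f xm" using g s1_def by simp
  moreover have "s1(h0 := return_pmf xm) =
      (\<lambda>h. if h \<in> insert h0 D then return_pmf ((g(h0 := xm)) h) else s h)"
    using insert.hyps by (auto simp: s1_def)
  ultimately show ?case unfolding f_def by metis
qed

lemma exists_pure_improvement_short:
  fixes \<Phi> :: "('c::finite list \<Rightarrow> 'x::finite pmf) \<Rightarrow> real"
  assumes "\<And>s h d. \<Phi> (s(h := d)) = (\<Sum>x\<in>UNIV. pmf d x * \<Phi> (s(h := return_pmf x)))"
    and short: "\<And>s s'. (\<And>h. length h < N \<Longrightarrow> s h = s' h) \<Longrightarrow> \<Phi> s = \<Phi> s'"
  shows "\<exists>g. \<Phi> s \<le> \<Phi> (\<lambda>h. return_pmf (g h))"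
proof -
  obtain g where "\<Phi> s \<le> \<Phi> (\<lambda>h. if h \<in> {h. length h < N} then return_pmf (g h) else s h)"
    using exists_pure_improvement[OF assms(1) finite_lists_shorter] by blast
  also have "\<dots> = \<Phi> (\<lambda>h. return_pmf (g h))"
    by (rule short) simp
  finally show ?thesis by blast
qed

section \<open>The value of the discounted game\<close>

lemma prob_simplex_eq_simplex_on: "prob_simplex = simplex_on UNIV"
  by (simp add: prob_simplex_def simplex_on_def)

lemma prob_simplex_nonempty: "prob_simplex \<noteq> {}"
  unfolding prob_simplex_eq_simplex_on by (rule simplex_on_nonempty) auto

lemma bdd_above_image_abs_le: "(\<And>x. x \<in> S \<Longrightarrow> \<bar>f x\<bar> \<le> (K::real)) \<Longrightarrow> bdd_above (f ` S)"
  by (rule bdd_aboveI2) (use abs_le_D1 in blast)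

lemma bdd_below_image_abs_le: "(\<And>x. x \<in> S \<Longrightarrow> \<bar>f x\<bar> \<le> (K::real)) \<Longrightarrow> bdd_below (f ` S)"
  by (rule bdd_belowI2[where m="- K"]) (use abs_le_iff in force)

lemma abs_SUP_le:
  assumes "S \<noteq> {}" "\<And>x. x \<in> S \<Longrightarrow> \<bar>f x\<bar> \<le> (K::real)"
  shows "\<bar>SUP x\<in>S. f x\<bar> \<le> K"
proof -
  obtain x where x: "x \<in> S" using assms(1) by blast
  have "(SUP x\<in>S. f x) \<le> K" by (rule cSUP_least[OF assms(1)]) (use assms(2) abs_le_D1 in blast)
  moreover have "f x \<le> (SUP x\<in>S. f x)" by (rule cSUP_upper[OF x bdd_above_image_abs_le[OF assms(2)]])
  moreover have "- K \<le> f x" using assms(2)[OF x] by (simp add: abs_le_iff)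
  ultimately show ?thesis by linarith
qed

lemma abs_INF_le:
  assumes "S \<noteq> {}" "\<And>x. x \<in> S \<Longrightarrow> \<bar>f x\<bar> \<le> (K::real)"
  shows "\<bar>INF x\<in>S. f x\<bar> \<le> K"
proof -
  obtain x where x: "x \<in> S" using assms(1) by blast
  have "- K \<le> (INF x\<in>S. f x)" by (rule cINF_greatest[OF assms(1)]) (use assms(2) abs_le_iff in force)
  moreover have "(INF x\<in>S. f x) \<le> f x" by (rule cINF_lower[OF bdd_below_image_abs_le[OF assms(2)] x])
  moreover have "f x \<le> K" using assms(2)[OF x] by (simp add: abs_le_iff)
  ultimately show ?thesis by linarith
qed

definition trunc_pay :: "real \<Rightarrow> ('k \<Rightarrow> 'l \<Rightarrow> 'a \<Rightarrow> 'b \<Rightarrow> real) \<Rightarrow> 'k \<Rightarrow> 'l \<Rightarrow> nat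
    \<Rightarrow> ('a,'b) strat1 \<Rightarrow> ('a,'b) strat2 \<Rightarrow> real" where
  "trunc_pay lam M k l N s t = (\<Sum>n<N. lam * (1 - lam) ^ n * stage_pay M k l s t n)"

lemma trunc_pay_linear_fst:
  fixes M :: "'k \<Rightarrow> 'l \<Rightarrow> 'a::finite \<Rightarrow> 'b::finite \<Rightarrow> real"
  assumes "\<And>h. realization fst s h = (\<Sum>i\<in>I. w i * realization fst (S i) h)"
  shows "trunc_pay lam M k l N s t = (\<Sum>i\<in>I. w i * trunc_pay lam M k l N (S i) t)"
  unfolding trunc_pay_def stage_pay_linear_fst[OF assms]
  by (simp add: sum_distrib_left mult_ac sum.swap[of _ I])

lemma trunc_pay_linear_snd:
  fixes M :: "'k \<Rightarrow> 'l \<Rightarrow> 'a::finite \<Rightarrow> 'b::finite \<Rightarrow> real"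
  assumes "\<And>h. realization snd t h = (\<Sum>i\<in>I. w i * realization snd (T i) h)"
  shows "trunc_pay lam M k l N s t = (\<Sum>i\<in>I. w i * trunc_pay lam M k l N s (T i))"
  unfolding trunc_pay_def stage_pay_linear_snd[OF assms]
  by (simp add: sum_distrib_left mult_ac sum.swap[of _ I])

lemma trunc_pay_fun_upd_fst:
  fixes M :: "'k \<Rightarrow> 'l \<Rightarrow> 'a::finite \<Rightarrow> 'b::finite \<Rightarrow> real"
  shows "trunc_pay lam M k l N (s(h := d)) t
    = (\<Sum>a\<in>UNIV. pmf d a * trunc_pay lam M k l N (s(h := return_pmf a)) t)"
  by (rule trunc_pay_linear_fst) (rule realization_fun_upd)

lemma trunc_pay_fun_upd_snd:
  fixes M :: "'k \<Rightarrow> 'l \<Rightarrow> 'a::finite \<Rightarrow> 'b::finite \<Rightarrow> real"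
  shows "trunc_pay lam M k l N s (t(h := d))
    = (\<Sum>b\<in>UNIV. pmf d b * trunc_pay lam M k l N s (t(h := return_pmf b)))"
  by (rule trunc_pay_linear_snd) (rule realization_fun_upd)

lemma trunc_pay_cong:
  fixes M :: "'k \<Rightarrow> 'l \<Rightarrow> 'a::finite \<Rightarrow> 'b::finite \<Rightarrow> real"
  assumes "\<And>h. length h < N \<Longrightarrow> s h = s' h" "\<And>h. length h < N \<Longrightarrow> t h = t' h"
  shows "trunc_pay lam M k l N s t = trunc_pay lam M k l N s' t'"
proof -
  have "stage_pay M k l s t n = stage_pay M k l s' t' n" if "n < N" for n
    unfolding stage_pay_eq_sum
    by (intro sum.cong refl arg_cong2[where f="(*)"] realization_cong)
      (use that in \<open>auto intro!: assms\<close>)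
  then show ?thesis unfolding trunc_pay_def by simp
qed

definition pay_bound :: "('k::finite \<Rightarrow> 'l::finite \<Rightarrow> 'a::finite \<Rightarrow> 'b::finite \<Rightarrow> real) \<Rightarrow> real" where
  "pay_bound M = Max (range (\<lambda>(k, l, a, b). \<bar>M k l a b\<bar>))"

lemma abs_le_pay_bound: "\<bar>M k l a b\<bar> \<le> pay_bound M"
  unfolding pay_bound_def by (rule Max_ge) (auto intro: image_eqI[of _ _ "(k, l, a, b)"])

lemma pay_bound_nonneg: "0 \<le> pay_bound M"
  using abs_le_pay_bound[of M] abs_ge_zero order.trans by metis

lemma expectation_abs_le:
  fixes f :: "'x \<Rightarrow> real"
  assumes bound: "\<And>x. \<bar>f x\<bar> \<le> B"
  shows "\<bar>measure_pmf.expectation D f\<bar> \<le> B"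
proof -
  have int: "integrable (measure_pmf D) f"
    by (rule measure_pmf.integrable_const_bound[where B=B]) (use bound in auto)
  have "measure_pmf.expectation D f \<le> B"
    by (rule measure_pmf.integral_le_const[OF int]) (use bound in \<open>auto simp: abs_le_iff\<close>)
  moreover have "- B \<le> measure_pmf.expectation D f"
  proof (rule measure_pmf.integral_ge_const[OF int], rule AE_I2)
    show "- B \<le> f x" for x using bound[of x] by (simp add: abs_le_iff)
  qed
  ultimately show ?thesis by simp
qed

lemma stage_pay_abs_le: "\<bar>stage_pay M k l s t n\<bar> \<le> pay_bound M"
  unfolding stage_pay_def
  by (intro expectation_abs_le) (simp add: abs_le_pay_bound split: prod.splits)

definition pay_given_type1 :: "real \<Rightarrow> ('k \<Rightarrow> 'l::finite \<Rightarrow> 'a \<Rightarrow> 'b \<Rightarrow> real) \<Rightarrow> ('l \<Rightarrow> real)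
    \<Rightarrow> ('l \<Rightarrow> ('a,'b) strat2) \<Rightarrow> 'k \<Rightarrow> ('a,'b) strat1 \<Rightarrow> real" where
  "pay_given_type1 lam M q \<tau> k s = (\<Sum>l\<in>UNIV. q l * disc_pay lam M k l s (\<tau> l))"

definition pay_given_type2 :: "real \<Rightarrow> ('k::finite \<Rightarrow> 'l \<Rightarrow> 'a \<Rightarrow> 'b \<Rightarrow> real) \<Rightarrow> ('k \<Rightarrow> real)
    \<Rightarrow> ('k \<Rightarrow> ('a,'b) strat1) \<Rightarrow> 'l \<Rightarrow> ('a,'b) strat2 \<Rightarrow> real" where
  "pay_given_type2 lam M p \<sigma> l t = (\<Sum>k\<in>UNIV. p k * disc_pay lam M k l (\<sigma> k) t)"

lemma w_val_eq: "w_val lam M q \<tau> k = (SUP s. pay_given_type1 lam M q \<tau> k s)"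
  by (simp add: w_val_def pay_given_type1_def)

lemma u_val_eq: "u_val lam M p \<sigma> l = (INF t. pay_given_type2 lam M p \<sigma> l t)"
  by (simp add: u_val_def pay_given_type2_def)

lemma gamma_pay_eq_sum_fst:
  "gamma_pay lam M p q \<sigma> \<tau> = (\<Sum>k\<in>UNIV. p k * pay_given_type1 lam M q \<tau> k (\<sigma> k))"
  unfolding gamma_pay_def pay_given_type1_def by (simp add: sum_distrib_left mult.assoc)

lemma gamma_pay_eq_sum_snd:
  fixes q :: "'l::finite \<Rightarrow> real"
  shows "gamma_pay lam M p q \<sigma> \<tau> = (\<Sum>l\<in>UNIV. q l * pay_given_type2 lam M p \<sigma> l (\<tau> l))"
  unfolding gamma_pay_def pay_given_type2_def
  by (simp add: sum_distrib_left mult_ac sum.swap[of _ "UNIV :: 'l set"])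

definition lower_value :: "real \<Rightarrow> ('k::finite \<Rightarrow> 'l::finite \<Rightarrow> 'a \<Rightarrow> 'b \<Rightarrow> real)
    \<Rightarrow> ('k \<Rightarrow> real) \<Rightarrow> ('l \<Rightarrow> real) \<Rightarrow> real" where
  "lower_value lam M p q = (SUP \<sigma>. INF \<tau>. gamma_pay lam M p q \<sigma> \<tau>)"

definition upper_value :: "real \<Rightarrow> ('k::finite \<Rightarrow> 'l::finite \<Rightarrow> 'a \<Rightarrow> 'b \<Rightarrow> real)
    \<Rightarrow> ('k \<Rightarrow> real) \<Rightarrow> ('l \<Rightarrow> real) \<Rightarrow> real" where
  "upper_value lam M p q = (INF \<tau>. SUP \<sigma>. gamma_pay lam M p q \<sigma> \<tau>)"

text \<open>Pure strategies of the game truncated after \<open>N\<close> stages: an action for every type and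
  every history of length less than \<open>N\<close>, extensional so that there are only finitely many.\<close>

definition pure_plans :: "nat \<Rightarrow> ('t \<times> ('a,'b) hist \<Rightarrow> 'x) set" where
  "pure_plans N = (UNIV \<times> {h. length h < N}) \<rightarrow>\<^sub>E UNIV"

definition pure_strat :: "('t \<times> ('a,'b) hist \<Rightarrow> 'x) \<Rightarrow> 't \<Rightarrow> ('a,'b) hist \<Rightarrow> 'x pmf" where
  "pure_strat f k h = return_pmf (f (k, h))"

lemma finite_pure_plans:
  "finite (pure_plans N :: ('t::finite \<times> ('a::finite,'b::finite) hist \<Rightarrow> 'x::finite) set)"
  unfolding pure_plans_def by (intro finite_PiE) (auto simp: finite_lists_shorter)

lemma pure_plans_nonempty: "pure_plans N \<noteq> {}"
  by (simp add: pure_plans_def PiE_eq_empty_iff)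

locale discounted_game =
  fixes lam :: real and M :: "'k::finite \<Rightarrow> 'l::finite \<Rightarrow> 'a::finite \<Rightarrow> 'b::finite \<Rightarrow> real"
    and p :: "'k \<Rightarrow> real" and q :: "'l \<Rightarrow> real"
  assumes lam: "0 < lam" "lam < 1"
    and p: "p \<in> prob_simplex" and q: "q \<in> prob_simplex"
begin

lemma discount_tail_sums: "(\<lambda>n. lam * (1 - lam) ^ (n + N) * B) sums ((1 - lam) ^ N * B)"
proof -
  have "(\<lambda>n. (1 - lam) ^ n) sums (1 / lam)"
    using geometric_sums[of "1 - lam"] lam by simp
  from sums_mult[OF this, of "lam * (1 - lam) ^ N * B"]
  show ?thesis using lam by (simp add: power_add mult_ac)
qed

lemma disc_pay_trunc_pay_abs_le:
  "\<bar>disc_pay lam M k l s t - trunc_pay lam M k l N s t\<bar> \<le> (1 - lam) ^ N * pay_bound M"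
proof -
  define f where "f n = lam * (1 - lam) ^ n * stage_pay M k l s t n" for n
  have bound: "\<bar>f n\<bar> \<le> lam * (1 - lam) ^ n * pay_bound M" for n
    using lam stage_pay_abs_le[of M k l s t n] by (auto simp: f_def abs_mult intro!: mult_left_mono)
  have "summable f"
    by (rule summable_comparison_test[OF _ sums_summable[OF discount_tail_sums[of 0 "pay_bound M"]]])
      (use bound in simp)
  then have "disc_pay lam M k l s t - trunc_pay lam M k l N s t = (\<Sum>n. f (n + N))"
    using suminf_split_initial_segment[of f N] unfolding disc_pay_def trunc_pay_def f_def by simp
  also have "\<bar>\<dots>\<bar> \<le> (\<Sum>n. lam * (1 - lam) ^ (n + N) * pay_bound M)"
    using norm_suminf_le[of "\<lambda>n. f (n + N)"] bound sums_summable[OF discount_tail_sums] by simp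
  also have "\<dots> = (1 - lam) ^ N * pay_bound M"
    using discount_tail_sums sums_unique by metis
  finally show ?thesis .
qed

lemma disc_pay_abs_le: "\<bar>disc_pay lam M k l s t\<bar> \<le> pay_bound M"
  using disc_pay_trunc_pay_abs_le[of k l s t 0] by (simp add: trunc_pay_def)

lemma pay_given_type1_abs_le: "\<bar>pay_given_type1 lam M q \<tau> k s\<bar> \<le> pay_bound M"
  unfolding pay_given_type1_def using q disc_pay_abs_le
  by (intro convex_sum_abs_le) (auto simp: prob_simplex_eq_simplex_on)

lemma pay_given_type2_abs_le: "\<bar>pay_given_type2 lam M p \<sigma> l t\<bar> \<le> pay_bound M"
  unfolding pay_given_type2_def using p disc_pay_abs_le
  by (intro convex_sum_abs_le) (auto simp: prob_simplex_eq_simplex_on)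

lemma gamma_pay_abs_le: "\<bar>gamma_pay lam M p q \<sigma> \<tau>\<bar> \<le> pay_bound M"
  unfolding gamma_pay_eq_sum_fst using p pay_given_type1_abs_le
  by (intro convex_sum_abs_le) (auto simp: prob_simplex_eq_simplex_on)

lemma INF_gamma_pay_le: "(INF \<tau>. gamma_pay lam M p q \<sigma> \<tau>) \<le> gamma_pay lam M p q \<sigma> \<tau>"
  by (rule cINF_lower[OF bdd_below_image_abs_le]) (auto intro: gamma_pay_abs_le)

lemma gamma_pay_le_SUP: "gamma_pay lam M p q \<sigma> \<tau> \<le> (SUP \<sigma>. gamma_pay lam M p q \<sigma> \<tau>)"
  by (rule cSUP_upper[OF _ bdd_above_image_abs_le]) (auto intro: gamma_pay_abs_le)

lemma INF_gamma_pay_le_lower_value: "(INF \<tau>. gamma_pay lam M p q \<sigma> \<tau>) \<le> lower_value lam M p q"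
  unfolding lower_value_def
  by (rule cSUP_upper[OF _ bdd_above_image_abs_le]) (auto intro: abs_INF_le gamma_pay_abs_le)

lemma upper_value_le_SUP_gamma_pay: "upper_value lam M p q \<le> (SUP \<sigma>. gamma_pay lam M p q \<sigma> \<tau>)"
  unfolding upper_value_def
  by (rule cINF_lower[OF bdd_below_image_abs_le]) (auto intro: abs_SUP_le gamma_pay_abs_le)

definition trunc_game_pay :: "nat \<Rightarrow> ('k \<Rightarrow> ('a,'b) strat1) \<Rightarrow> ('l \<Rightarrow> ('a,'b) strat2) \<Rightarrow> real" where
  "trunc_game_pay N \<sigma> \<tau> = (\<Sum>k\<in>UNIV. \<Sum>l\<in>UNIV. p k * q l * trunc_pay lam M k l N (\<sigma> k) (\<tau> l))"

lemma gamma_pay_trunc_game_pay_abs_le: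
  "\<bar>gamma_pay lam M p q \<sigma> \<tau> - trunc_game_pay N \<sigma> \<tau>\<bar> \<le> (1 - lam) ^ N * pay_bound M"
proof -
  have "gamma_pay lam M p q \<sigma> \<tau> - trunc_game_pay N \<sigma> \<tau> = (\<Sum>k\<in>UNIV. p k * (\<Sum>l\<in>UNIV. q l *
      (disc_pay lam M k l (\<sigma> k) (\<tau> l) - trunc_pay lam M k l N (\<sigma> k) (\<tau> l))))"
    unfolding gamma_pay_def trunc_game_pay_def
    by (simp add: sum_subtractf right_diff_distrib sum_distrib_left mult.assoc)
  also have "\<bar>\<dots>\<bar> \<le> (1 - lam) ^ N * pay_bound M"
    using p q disc_pay_trunc_pay_abs_le
    by (intro convex_sum_abs_le) (auto simp: prob_simplex_eq_simplex_on)
  finally show ?thesis .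
qed

lemma trunc_game_pure_reply_fst:
  "\<exists>f\<in>pure_plans N. trunc_game_pay N \<sigma> \<tau> \<le> trunc_game_pay N (pure_strat f) \<tau>"
proof -
  define \<Phi> where "\<Phi> k s = (\<Sum>l\<in>UNIV. q l * trunc_pay lam M k l N s (\<tau> l))" for k s
  have game: "trunc_game_pay N \<sigma>' \<tau> = (\<Sum>k\<in>UNIV. p k * \<Phi> k (\<sigma>' k))" for \<sigma>'
    unfolding trunc_game_pay_def \<Phi>_def by (simp add: sum_distrib_left mult.assoc)
  have affine: "\<Phi> k (s(h := d)) = (\<Sum>a\<in>UNIV. pmf d a * \<Phi> k (s(h := return_pmf a)))" for k s h d
    unfolding \<Phi>_def trunc_pay_fun_upd_fst[where s=s and h=h and d=d]
    by (simp add: sum_distrib_left mult_ac sum.swap[of _ "UNIV :: 'a set"])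
  have short: "\<Phi> k s = \<Phi> k s'" if "\<And>h. length h < N \<Longrightarrow> s h = s' h" for k s s'
    unfolding \<Phi>_def using that by (intro sum.cong refl arg_cong2[where f="(*)"] trunc_pay_cong) auto
  have "\<forall>k. \<exists>g. \<Phi> k (\<sigma> k) \<le> \<Phi> k (\<lambda>h. return_pmf (g h))"
    using exists_pure_improvement_short[OF affine short] by blast
  then obtain g where g: "\<And>k. \<Phi> k (\<sigma> k) \<le> \<Phi> k (\<lambda>h. return_pmf (g k h))"
    by metis
  define f where "f = restrict (\<lambda>(k, h). g k h) (UNIV \<times> {h. length h < N})"
  have "\<Phi> k (\<sigma> k) \<le> \<Phi> k (pure_strat f k)" for k
    using g[of k] short[of "\<lambda>h. return_pmf (g k h)" "pure_strat f k" k]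
    by (simp add: pure_strat_def f_def)
  then have "trunc_game_pay N \<sigma> \<tau> \<le> trunc_game_pay N (pure_strat f) \<tau>"
    unfolding game using p
    by (intro sum_mono mult_left_mono) (auto simp: prob_simplex_def)
  moreover have "f \<in> pure_plans N" by (simp add: f_def pure_plans_def)
  ultimately show ?thesis by blast
qed

lemma trunc_game_pure_reply_snd:
  "\<exists>g\<in>pure_plans N. trunc_game_pay N \<sigma> (pure_strat g) \<le> trunc_game_pay N \<sigma> \<tau>"
proof -
  define \<Phi> where "\<Phi> l t = - (\<Sum>k\<in>UNIV. p k * trunc_pay lam M k l N (\<sigma> k) t)" for l t
  have game: "trunc_game_pay N \<sigma> \<tau>' = - (\<Sum>l\<in>UNIV. q l * \<Phi> l (\<tau>' l))" for \<tau>'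
    unfolding trunc_game_pay_def \<Phi>_def
    by (simp add: sum_distrib_left mult_ac sum_negf sum.swap[of _ "UNIV :: 'l set"])
  have affine: "\<Phi> l (t(h := d)) = (\<Sum>b\<in>UNIV. pmf d b * \<Phi> l (t(h := return_pmf b)))" for l t h d
    unfolding \<Phi>_def trunc_pay_fun_upd_snd[where t=t and h=h and d=d]
    by (simp add: sum_distrib_left mult_ac sum_negf sum.swap[of _ "UNIV :: 'b set"])
  have short: "\<Phi> l t = \<Phi> l t'" if "\<And>h. length h < N \<Longrightarrow> t h = t' h" for l t t'
    unfolding \<Phi>_def using that by (intro arg_cong[where f=uminus] sum.cong refl arg_cong2[where f="(*)"] trunc_pay_cong) auto
  have "\<forall>l. \<exists>g. \<Phi> l (\<tau> l) \<le> \<Phi> l (\<lambda>h. return_pmf (g h))"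
    using exists_pure_improvement_short[OF affine short] by blast
  then obtain g where g: "\<And>l. \<Phi> l (\<tau> l) \<le> \<Phi> l (\<lambda>h. return_pmf (g l h))"
    by metis
  define f where "f = restrict (\<lambda>(l, h). g l h) (UNIV \<times> {h. length h < N})"
  have "\<Phi> l (\<tau> l) \<le> \<Phi> l (pure_strat f l)" for l
    using g[of l] short[of "\<lambda>h. return_pmf (g l h)" "pure_strat f l" l]
    by (simp add: pure_strat_def f_def)
  then have "trunc_game_pay N \<sigma> (pure_strat f) \<le> trunc_game_pay N \<sigma> \<tau>"
    unfolding game using q
    by (simp, intro sum_mono mult_left_mono) (auto simp: prob_simplex_def)
  moreover have "f \<in> pure_plans N" by (simp add: f_def pure_plans_def)
  ultimately show ?thesis by blast
qed

lemma trunc_game_mixed_fst: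
  assumes "x \<in> simplex_on (pure_plans N)"
  shows "\<exists>\<sigma>. \<forall>\<tau>. trunc_game_pay N \<sigma> \<tau> = (\<Sum>f\<in>pure_plans N. x f * trunc_game_pay N (pure_strat f) \<tau>)"
proof -
  have "\<exists>s. \<forall>h. realization fst s h = (\<Sum>f\<in>pure_plans N. x f * realization fst (pure_strat f k) h)" for k
    using realization_mixture[OF finite_pure_plans assms, where own=fst and S="\<lambda>f. pure_strat f k"] .
  then obtain S where S: "\<And>k h. realization fst (S k) h = (\<Sum>f\<in>pure_plans N. x f * realization fst (pure_strat f k) h)"
    by metis
  have "trunc_game_pay N S \<tau> = (\<Sum>f\<in>pure_plans N. x f * trunc_game_pay N (pure_strat f) \<tau>)" for \<tau>
    unfolding trunc_game_pay_def trunc_pay_linear_fst[OF S]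
    by (simp add: sum_distrib_left mult_ac sum.swap[of _ "pure_plans N"])
  then show ?thesis by blast
qed

lemma trunc_game_mixed_snd:
  assumes "y \<in> simplex_on (pure_plans N)"
  shows "\<exists>\<tau>. \<forall>\<sigma>. trunc_game_pay N \<sigma> \<tau> = (\<Sum>g\<in>pure_plans N. y g * trunc_game_pay N \<sigma> (pure_strat g))"
proof -
  have "\<exists>t. \<forall>h. realization snd t h = (\<Sum>g\<in>pure_plans N. y g * realization snd (pure_strat g l) h)" for l
    using realization_mixture[OF finite_pure_plans assms, where own=snd and S="\<lambda>g. pure_strat g l"] .
  then obtain T where T: "\<And>l h. realization snd (T l) h = (\<Sum>g\<in>pure_plans N. y g * realization snd (pure_strat g l) h)"
    by metis
  have "trunc_game_pay N \<sigma> T = (\<Sum>g\<in>pure_plans N. y g * trunc_game_pay N \<sigma> (pure_strat g))" for \<sigma>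
    unfolding trunc_game_pay_def trunc_pay_linear_snd[OF T]
    by (simp add: sum_distrib_left mult_ac sum.swap[of _ "pure_plans N"])
  then show ?thesis by blast
qed

lemma gamma_pay_approx_saddle:
  assumes "0 < \<epsilon>"
  shows "\<exists>\<sigma>' \<tau>'. \<forall>\<sigma> \<tau>. gamma_pay lam M p q \<sigma> \<tau>' \<le> gamma_pay lam M p q \<sigma>' \<tau> + \<epsilon>"
proof -
  have "0 < \<epsilon> / (3 * (pay_bound M + 1))" using assms pay_bound_nonneg[of M] by simp
  then obtain N where N: "(1 - lam) ^ N < \<epsilon> / (3 * (pay_bound M + 1))"
    using real_arch_pow_inv[of _ "1 - lam"] lam by auto
  have "(1 - lam) ^ N * pay_bound M \<le> (1 - lam) ^ N * (pay_bound M + 1)"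
    using lam by (intro mult_left_mono) auto
  also have "\<dots> \<le> \<epsilon> / 3"
    using N pay_bound_nonneg[of M] by (simp add: field_simps)
  finally have approx: "\<bar>gamma_pay lam M p q \<sigma> \<tau> - trunc_game_pay N \<sigma> \<tau>\<bar> \<le> \<epsilon> / 3" for \<sigma> \<tau>
    using gamma_pay_trunc_game_pay_abs_le[of \<sigma> \<tau> N] by linarith
  define X where "X = (pure_plans N :: ('k \<times> ('a,'b) hist \<Rightarrow> 'a) set)"
  define Y where "Y = (pure_plans N :: ('l \<times> ('a,'b) hist \<Rightarrow> 'b) set)"
  define A where "A f g = trunc_game_pay N (pure_strat f) (pure_strat g)" for f g
  obtain x y where x: "x \<in> simplex_on X" and y: "y \<in> simplex_on Y" and
    saddle: "\<forall>f\<in>X. \<forall>g\<in>Y. (\<Sum>g'\<in>Y. y g' * A f g') \<le> (\<Sum>f'\<in>X. x f' * A f' g) + \<epsilon> / 3"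
    using minimax_approx_saddle[of X Y "\<epsilon> / 3" A] assms
    unfolding X_def Y_def by (auto simp: finite_pure_plans pure_plans_nonempty)
  obtain \<sigma>' where \<sigma>': "\<And>\<tau>. trunc_game_pay N \<sigma>' \<tau> = (\<Sum>f\<in>X. x f * trunc_game_pay N (pure_strat f) \<tau>)"
    using trunc_game_mixed_fst x unfolding X_def by blast
  obtain \<tau>' where \<tau>': "\<And>\<sigma>. trunc_game_pay N \<sigma> \<tau>' = (\<Sum>g\<in>Y. y g * trunc_game_pay N \<sigma> (pure_strat g))"
    using trunc_game_mixed_snd y unfolding Y_def by blast
  have "gamma_pay lam M p q \<sigma> \<tau>' \<le> gamma_pay lam M p q \<sigma>' \<tau> + \<epsilon>" for \<sigma> \<tau>
  proof -
    obtain f where f: "f \<in> X" "trunc_game_pay N \<sigma> \<tau>' \<le> trunc_game_pay N (pure_strat f) \<tau>'"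
      using trunc_game_pure_reply_fst unfolding X_def by blast
    obtain g where g: "g \<in> Y" "trunc_game_pay N \<sigma>' (pure_strat g) \<le> trunc_game_pay N \<sigma>' \<tau>"
      using trunc_game_pure_reply_snd unfolding Y_def by blast
    have "trunc_game_pay N (pure_strat f) \<tau>' \<le> trunc_game_pay N \<sigma>' (pure_strat g) + \<epsilon> / 3"
      using saddle f(1) g(1) unfolding \<sigma>' \<tau>' A_def by blast
    then show ?thesis
      using f(2) g(2) approx[of \<sigma> \<tau>'] approx[of \<sigma>' \<tau>] by linarith
  qed
  then show ?thesis by blast
qed

theorem upper_value_le_lower_value: "upper_value lam M p q \<le> lower_value lam M p q"
proof (rule field_le_epsilon)
  fix \<epsilon> :: real assume "0 < \<epsilon>"
  then obtain \<sigma>' \<tau>' where saddle: "\<And>\<sigma> \<tau>. gamma_pay lam M p q \<sigma> \<tau>' \<le> gamma_pay lam M p q \<sigma>' \<tau> + \<epsilon>"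
    using gamma_pay_approx_saddle by blast
  have "upper_value lam M p q \<le> (SUP \<sigma>. gamma_pay lam M p q \<sigma> \<tau>')"
    by (rule upper_value_le_SUP_gamma_pay)
  also have "\<dots> \<le> (INF \<tau>. gamma_pay lam M p q \<sigma>' \<tau>) + \<epsilon>"
  proof (rule cSUP_least)
    fix \<sigma>
    have "gamma_pay lam M p q \<sigma> \<tau>' - \<epsilon> \<le> (INF \<tau>. gamma_pay lam M p q \<sigma>' \<tau>)"
      by (rule cINF_greatest) (use saddle in \<open>auto simp: algebra_simps\<close>)
    then show "gamma_pay lam M p q \<sigma> \<tau>' \<le> (INF \<tau>. gamma_pay lam M p q \<sigma>' \<tau>) + \<epsilon>" by linarith
  qed simp
  also have "\<dots> \<le> lower_value lam M p q + \<epsilon>"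
    using INF_gamma_pay_le_lower_value[of \<sigma>'] by linarith
  finally show "upper_value lam M p q \<le> lower_value lam M p q + \<epsilon>" .
qed

section \<open>The dual games\<close>

definition dual1_pay :: "('k \<Rightarrow> real) \<Rightarrow> ('k \<Rightarrow> real) \<Rightarrow> ('k \<Rightarrow> ('a,'b) strat1)
    \<Rightarrow> ('l \<Rightarrow> ('a,'b) strat2) \<Rightarrow> real" where
  "dual1_pay \<mu> \<pi> \<sigma> \<tau> = (\<Sum>k\<in>UNIV. \<pi> k * (\<mu> k + pay_given_type1 lam M q \<tau> k (\<sigma> k)))"

definition dual2_pay :: "('l \<Rightarrow> real) \<Rightarrow> ('k \<Rightarrow> ('a,'b) strat1) \<Rightarrow> ('l \<Rightarrow> real)
    \<Rightarrow> ('l \<Rightarrow> ('a,'b) strat2) \<Rightarrow> real" where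
  "dual2_pay \<nu> \<sigma> \<rho> \<tau> = (\<Sum>l\<in>UNIV. \<rho> l * (\<nu> l + pay_given_type2 lam M p \<sigma> l (\<tau> l)))"

lemma V1_dual_eq: "V1_dual lam M \<mu> q = (SUP \<pi>\<in>prob_simplex. SUP \<sigma>. INF \<tau>. dual1_pay \<mu> \<pi> \<sigma> \<tau>)"
  by (simp add: V1_dual_def dual1_pay_def pay_given_type1_def)

lemma pay_given_type1_le_w_val: "pay_given_type1 lam M q \<tau> k s \<le> w_val lam M q \<tau> k"
  unfolding w_val_eq by (rule cSUP_upper[OF _ bdd_above_image_abs_le]) (auto intro: pay_given_type1_abs_le)

lemma u_val_le_pay_given_type2: "u_val lam M p \<sigma> l \<le> pay_given_type2 lam M p \<sigma> l t"
  unfolding u_val_eq by (rule cINF_lower[OF bdd_below_image_abs_le]) (auto intro: pay_given_type2_abs_le)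

lemma dual1_pay_abs_le:
  assumes "\<pi> \<in> prob_simplex"
  shows "\<bar>dual1_pay \<mu> \<pi> \<sigma> \<tau>\<bar> \<le> (\<Sum>k\<in>UNIV. \<bar>\<mu> k\<bar>) + pay_bound M"
  unfolding dual1_pay_def
proof (rule convex_sum_abs_le)
  show "\<pi> \<in> simplex_on UNIV" using assms by (simp add: prob_simplex_eq_simplex_on)
  fix k
  have "\<bar>\<mu> k\<bar> \<le> (\<Sum>k\<in>UNIV. \<bar>\<mu> k\<bar>)" by (rule member_le_sum) auto
  then show "\<bar>\<mu> k + pay_given_type1 lam M q \<tau> k (\<sigma> k)\<bar> \<le> (\<Sum>k\<in>UNIV. \<bar>\<mu> k\<bar>) + pay_bound M"
    using pay_given_type1_abs_le[of \<tau> k "\<sigma> k"] by linarith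
qed

lemma dual2_pay_abs_le:
  assumes "\<rho> \<in> prob_simplex"
  shows "\<bar>dual2_pay \<nu> \<sigma> \<rho> \<tau>\<bar> \<le> (\<Sum>l\<in>UNIV. \<bar>\<nu> l\<bar>) + pay_bound M"
  unfolding dual2_pay_def
proof (rule convex_sum_abs_le)
  show "\<rho> \<in> simplex_on UNIV" using assms by (simp add: prob_simplex_eq_simplex_on)
  fix l
  have "\<bar>\<nu> l\<bar> \<le> (\<Sum>l\<in>UNIV. \<bar>\<nu> l\<bar>)" by (rule member_le_sum) auto
  then show "\<bar>\<nu> l + pay_given_type2 lam M p \<sigma> l (\<tau> l)\<bar> \<le> (\<Sum>l\<in>UNIV. \<bar>\<nu> l\<bar>) + pay_bound M"
    using pay_given_type2_abs_le[of \<sigma> l "\<tau> l"] by linarith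
qed

lemma V2_dual_eq: "V2_dual lam M p \<nu> = (SUP \<sigma>. INF \<rho>\<in>prob_simplex. INF \<tau>. dual2_pay \<nu> \<sigma> \<rho> \<tau>)"
proof -
  have "(\<Sum>k\<in>UNIV. p k * (\<Sum>l\<in>UNIV. \<rho> l * (\<nu> l + disc_pay lam M k l (\<sigma> k) (\<tau> l))))
      = dual2_pay \<nu> \<sigma> \<rho> \<tau>" for \<sigma> \<rho> \<tau>
  proof -
    have "(\<Sum>k\<in>UNIV. p k * (\<Sum>l\<in>UNIV. \<rho> l * (\<nu> l + disc_pay lam M k l (\<sigma> k) (\<tau> l))))
      = (\<Sum>l\<in>UNIV. \<rho> l * (\<Sum>k\<in>UNIV. p k * (\<nu> l + disc_pay lam M k l (\<sigma> k) (\<tau> l))))"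
      by (simp add: sum_distrib_left mult.left_commute sum.swap[of _ "UNIV :: 'l set"])
    also have "\<dots> = dual2_pay \<nu> \<sigma> \<rho> \<tau>"
      using p by (simp add: dual2_pay_def pay_given_type2_def prob_simplex_def distrib_left sum.distrib
        flip: sum_distrib_right)
    finally show ?thesis .
  qed
  then show ?thesis unfolding V2_dual_def by simp
qed

lemma dual1_pay_at_prior: "dual1_pay \<mu> p \<sigma> \<tau> = (\<Sum>k\<in>UNIV. p k * \<mu> k) + gamma_pay lam M p q \<sigma> \<tau>"
  unfolding dual1_pay_def gamma_pay_eq_sum_fst by (simp add: distrib_left sum.distrib)

lemma dual2_pay_at_prior: "dual2_pay \<nu> \<sigma> q \<tau> = (\<Sum>l\<in>UNIV. q l * \<nu> l) + gamma_pay lam M p q \<sigma> \<tau>"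
  unfolding dual2_pay_def gamma_pay_eq_sum_snd by (simp add: distrib_left sum.distrib)

lemma V1_dual_neg_w_val_le: "V1_dual lam M (\<lambda>k. - w_val lam M q \<tau> k) q \<le> 0"
  unfolding V1_dual_eq
proof (intro cSUP_least)
  show "(prob_simplex :: ('k \<Rightarrow> real) set) \<noteq> {}" by (rule prob_simplex_nonempty)
  fix \<pi> :: "'k \<Rightarrow> real" and \<sigma> assume \<pi>: "\<pi> \<in> prob_simplex"
  let ?\<mu> = "\<lambda>k. - w_val lam M q \<tau> k"
  have "(INF \<tau>'. dual1_pay ?\<mu> \<pi> \<sigma> \<tau>') \<le> dual1_pay ?\<mu> \<pi> \<sigma> \<tau>"
    by (rule cINF_lower[OF bdd_below_image_abs_le]) (auto intro: dual1_pay_abs_le[OF \<pi>])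
  also have "\<dots> \<le> 0"
    unfolding dual1_pay_def using \<pi> pay_given_type1_le_w_val
    by (intro sum_nonpos mult_nonneg_nonpos) (auto simp: prob_simplex_def)
  finally show "(INF \<tau>'. dual1_pay ?\<mu> \<pi> \<sigma> \<tau>') \<le> 0" .
qed simp

lemma lower_value_le_V1_dual: "lower_value lam M p q \<le> V1_dual lam M \<mu> q - (\<Sum>k\<in>UNIV. p k * \<mu> k)"
proof -
  let ?K = "(\<Sum>k\<in>UNIV. \<bar>\<mu> k\<bar>) + pay_bound M"
  have INF_bound: "\<bar>INF \<tau>. dual1_pay \<mu> \<pi> \<sigma> \<tau>\<bar> \<le> ?K" if "\<pi> \<in> prob_simplex" for \<pi> \<sigma>
    by (rule abs_INF_le) (auto intro: dual1_pay_abs_le[OF that])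
  have SUP_bound: "\<bar>SUP \<sigma>. INF \<tau>. dual1_pay \<mu> \<pi> \<sigma> \<tau>\<bar> \<le> ?K" if "\<pi> \<in> prob_simplex" for \<pi>
    by (rule abs_SUP_le) (auto intro: INF_bound[OF that])
  have "(INF \<tau>. gamma_pay lam M p q \<sigma> \<tau>) \<le> V1_dual lam M \<mu> q - (\<Sum>k\<in>UNIV. p k * \<mu> k)" for \<sigma>
  proof -
    have "(\<Sum>k\<in>UNIV. p k * \<mu> k) + (INF \<tau>. gamma_pay lam M p q \<sigma> \<tau>) \<le> (INF \<tau>. dual1_pay \<mu> p \<sigma> \<tau>)"
      by (rule cINF_greatest) (use INF_gamma_pay_le in \<open>auto simp: dual1_pay_at_prior\<close>)
    also have "\<dots> \<le> (SUP \<sigma>. INF \<tau>. dual1_pay \<mu> p \<sigma> \<tau>)"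
      by (rule cSUP_upper[OF _ bdd_above_image_abs_le]) (auto intro: INF_bound[OF p])
    also have "\<dots> \<le> V1_dual lam M \<mu> q"
      unfolding V1_dual_eq by (rule cSUP_upper[OF p bdd_above_image_abs_le]) (auto intro: SUP_bound)
    finally show ?thesis by linarith
  qed
  then show ?thesis unfolding lower_value_def by (intro cSUP_least) auto
qed

lemma sum_w_val_le_SUP_gamma_pay:
  "(\<Sum>k\<in>UNIV. p k * w_val lam M q \<tau> k) \<le> (SUP \<sigma>. gamma_pay lam M p q \<sigma> \<tau>)"
proof (rule field_le_epsilon)
  fix \<epsilon> :: real assume "0 < \<epsilon>"
  have "\<exists>s. w_val lam M q \<tau> k - \<epsilon> < pay_given_type1 lam M q \<tau> k s" for k
  proof -
    have "w_val lam M q \<tau> k - \<epsilon> < (SUP s. pay_given_type1 lam M q \<tau> k s)"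
      using \<open>0 < \<epsilon>\<close> by (simp add: w_val_eq)
    then show ?thesis
      by (subst (asm) less_cSUP_iff) (auto intro: bdd_above_image_abs_le pay_given_type1_abs_le)
  qed
  then obtain S where S: "\<And>k. w_val lam M q \<tau> k - \<epsilon> < pay_given_type1 lam M q \<tau> k (S k)"
    by metis
  have "(\<Sum>k\<in>UNIV. p k * (w_val lam M q \<tau> k - \<epsilon>)) \<le> gamma_pay lam M p q S \<tau>"
    unfolding gamma_pay_eq_sum_fst using p S
    by (intro sum_mono mult_left_mono) (auto simp: prob_simplex_def less_imp_le)
  also have "\<dots> \<le> (SUP \<sigma>. gamma_pay lam M p q \<sigma> \<tau>)" by (rule gamma_pay_le_SUP)
  finally show "(\<Sum>k\<in>UNIV. p k * w_val lam M q \<tau> k) \<le> (SUP \<sigma>. gamma_pay lam M p q \<sigma> \<tau>) + \<epsilon>"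
    using p by (simp add: prob_simplex_def right_diff_distrib sum_subtractf flip: sum_distrib_right)
qed

lemma V2_dual_le_lower_value: "V2_dual lam M p \<nu> - (\<Sum>l\<in>UNIV. q l * \<nu> l) \<le> lower_value lam M p q"
proof -
  have "V2_dual lam M p \<nu> \<le> (\<Sum>l\<in>UNIV. q l * \<nu> l) + lower_value lam M p q"
    unfolding V2_dual_eq
  proof (rule cSUP_least)
    fix \<sigma>
    have "(INF \<rho>\<in>prob_simplex. INF \<tau>. dual2_pay \<nu> \<sigma> \<rho> \<tau>) \<le> (INF \<tau>. dual2_pay \<nu> \<sigma> q \<tau>)"
      by (rule cINF_lower[OF bdd_below_image_abs_le q]) (auto intro: abs_INF_le dual2_pay_abs_le)
    also have "\<dots> \<le> (\<Sum>l\<in>UNIV. q l * \<nu> l) + (INF \<tau>. gamma_pay lam M p q \<sigma> \<tau>)"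
    proof -
      have "(INF \<tau>. dual2_pay \<nu> \<sigma> q \<tau>) - (\<Sum>l\<in>UNIV. q l * \<nu> l) \<le> (INF \<tau>. gamma_pay lam M p q \<sigma> \<tau>)"
      proof (rule cINF_greatest)
        fix \<tau>
        have "(INF \<tau>. dual2_pay \<nu> \<sigma> q \<tau>) \<le> dual2_pay \<nu> \<sigma> q \<tau>"
          by (rule cINF_lower[OF bdd_below_image_abs_le]) (auto intro: dual2_pay_abs_le[OF q])
        then show "(INF \<tau>. dual2_pay \<nu> \<sigma> q \<tau>) - (\<Sum>l\<in>UNIV. q l * \<nu> l) \<le> gamma_pay lam M p q \<sigma> \<tau>"
          by (simp add: dual2_pay_at_prior)
      qed simp
      then show ?thesis by linarith
    qed
    also have "\<dots> \<le> (\<Sum>l\<in>UNIV. q l * \<nu> l) + lower_value lam M p q"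
      using INF_gamma_pay_le_lower_value[of \<sigma>] by linarith
    finally show "(INF \<rho>\<in>prob_simplex. INF \<tau>. dual2_pay \<nu> \<sigma> \<rho> \<tau>)
        \<le> (\<Sum>l\<in>UNIV. q l * \<nu> l) + lower_value lam M p q" .
  qed simp
  then show ?thesis by linarith
qed

lemma INF_gamma_pay_le_sum_u_val:
  "(INF \<tau>. gamma_pay lam M p q \<sigma> \<tau>) \<le> (\<Sum>l\<in>UNIV. q l * u_val lam M p \<sigma> l)"
proof (rule field_le_epsilon)
  fix \<epsilon> :: real assume "0 < \<epsilon>"
  have "\<exists>t. pay_given_type2 lam M p \<sigma> l t < u_val lam M p \<sigma> l + \<epsilon>" for l
  proof -
    have "(INF t. pay_given_type2 lam M p \<sigma> l t) < u_val lam M p \<sigma> l + \<epsilon>"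
      using \<open>0 < \<epsilon>\<close> by (simp add: u_val_eq)
    then show ?thesis
      by (subst (asm) cINF_less_iff) (auto intro: bdd_below_image_abs_le pay_given_type2_abs_le)
  qed
  then obtain T where T: "\<And>l. pay_given_type2 lam M p \<sigma> l (T l) < u_val lam M p \<sigma> l + \<epsilon>"
    by metis
  have "(INF \<tau>. gamma_pay lam M p q \<sigma> \<tau>) \<le> gamma_pay lam M p q \<sigma> T" by (rule INF_gamma_pay_le)
  also have "\<dots> \<le> (\<Sum>l\<in>UNIV. q l * (u_val lam M p \<sigma> l + \<epsilon>))"
    unfolding gamma_pay_eq_sum_snd using q T
    by (intro sum_mono mult_left_mono) (auto simp: prob_simplex_def less_imp_le)
  finally show "(INF \<tau>. gamma_pay lam M p q \<sigma> \<tau>) \<le> (\<Sum>l\<in>UNIV. q l * u_val lam M p \<sigma> l) + \<epsilon>"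
    using q by (simp add: prob_simplex_def distrib_left sum.distrib flip: sum_distrib_right)
qed

lemma V2_dual_neg_u_val_ge: "0 \<le> V2_dual lam M p (\<lambda>l. - u_val lam M p \<sigma> l)"
proof -
  let ?\<nu> = "\<lambda>l. - u_val lam M p \<sigma> l"
  let ?K = "(\<Sum>l\<in>UNIV. \<bar>?\<nu> l\<bar>) + pay_bound M"
  have INF_bound: "\<bar>INF \<tau>. dual2_pay ?\<nu> \<sigma>' \<rho> \<tau>\<bar> \<le> ?K" if "\<rho> \<in> prob_simplex" for \<sigma>' \<rho>
    by (rule abs_INF_le[OF UNIV_not_empty dual2_pay_abs_le[OF that]])
  have INF2_bound: "\<bar>INF \<rho>\<in>prob_simplex. INF \<tau>. dual2_pay ?\<nu> \<sigma>' \<rho> \<tau>\<bar> \<le> ?K" for \<sigma>'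
    using q by (intro abs_INF_le INF_bound) auto
  have "0 \<le> (INF \<rho>\<in>prob_simplex. INF \<tau>. dual2_pay ?\<nu> \<sigma> \<rho> \<tau>)"
  proof (rule cINF_greatest)
    show "(prob_simplex :: ('l \<Rightarrow> real) set) \<noteq> {}" by (rule prob_simplex_nonempty)
    fix \<rho> :: "'l \<Rightarrow> real" assume \<rho>: "\<rho> \<in> prob_simplex"
    show "0 \<le> (INF \<tau>. dual2_pay ?\<nu> \<sigma> \<rho> \<tau>)"
    proof (rule cINF_greatest)
      fix \<tau>
      have "0 \<le> \<rho> l * (?\<nu> l + pay_given_type2 lam M p \<sigma> l (\<tau> l))" for l
        using \<rho> u_val_le_pay_given_type2[of \<sigma> l "\<tau> l"] by (simp add: prob_simplex_def)
      then show "0 \<le> dual2_pay ?\<nu> \<sigma> \<rho> \<tau>"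
        unfolding dual2_pay_def by (rule sum_nonneg)
    qed simp
  qed
  also have "\<dots> \<le> V2_dual lam M p ?\<nu>"
    unfolding V2_dual_eq by (rule cSUP_upper[OF _ bdd_above_image_abs_le]) (auto intro: INF2_bound)
  finally show ?thesis .
qed

end

theorem lemma3:
  fixes M :: "'k::finite \<Rightarrow> 'l::finite \<Rightarrow> 'a::finite \<Rightarrow> 'b::finite \<Rightarrow> real"
    and p :: "'k \<Rightarrow> real" and q :: "'l \<Rightarrow> real" and lam :: real
    and \<sigma>s :: "'k \<Rightarrow> ('a,'b) strat1" and \<tau>s :: "'l \<Rightarrow> ('a,'b) strat2"
  assumes "0 < lam" and "lam < 1"
    and "\<forall>k. 0 < p k" and "sum p UNIV = 1"
    and "\<forall>l. 0 < q l" and "sum q UNIV = 1"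
    and "security1 lam M p q \<sigma>s" and "security2 lam M p q \<tau>s"
  shows "(\<forall>\<mu>. V1_dual lam M (\<lambda>k. - w_val lam M q \<tau>s k) q
                 - (\<Sum>k\<in>UNIV. p k * (- w_val lam M q \<tau>s k))
             \<le> V1_dual lam M \<mu> q - (\<Sum>k\<in>UNIV. p k * \<mu> k))
       \<and> (\<forall>\<nu>. V2_dual lam M p \<nu> - (\<Sum>l\<in>UNIV. q l * \<nu> l)
             \<le> V2_dual lam M p (\<lambda>l. - u_val lam M p \<sigma>s l)
                 - (\<Sum>l\<in>UNIV. q l * (- u_val lam M p \<sigma>s l)))"
proof -
  interpret discounted_game lam M p q
    using assms(1-6) by unfold_locales (auto simp: prob_simplex_def less_imp_le)
  have sec1: "(INF \<tau>. gamma_pay lam M p q \<sigma>s \<tau>) = lower_value lam M p q"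
    using assms(7) by (simp add: security1_def lower_value_def)
  have sec2: "(SUP \<sigma>. gamma_pay lam M p q \<sigma> \<tau>s) = upper_value lam M p q"
    using assms(8) by (simp add: security2_def upper_value_def)
  have "V1_dual lam M (\<lambda>k. - w_val lam M q \<tau>s k) q + (\<Sum>k\<in>UNIV. p k * w_val lam M q \<tau>s k)
      \<le> V1_dual lam M \<mu> q - (\<Sum>k\<in>UNIV. p k * \<mu> k)" for \<mu>
    using V1_dual_neg_w_val_le[of \<tau>s] sum_w_val_le_SUP_gamma_pay[of \<tau>s] sec2
      upper_value_le_lower_value lower_value_le_V1_dual[of \<mu>] by linarith
  moreover have "V2_dual lam M p \<nu> - (\<Sum>l\<in>UNIV. q l * \<nu> l)
      \<le> V2_dual lam M p (\<lambda>l. - u_val lam M p \<sigma>s l) + (\<Sum>l\<in>UNIV. q l * u_val lam M p \<sigma>s l)" for \<nu>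
    using V2_dual_le_lower_value[of \<nu>] sec1 INF_gamma_pay_le_sum_u_val[of \<sigma>s]
      V2_dual_neg_u_val_ge[of \<sigma>s] by linarith
  ultimately show ?thesis by (simp add: sum_negf)
qed

end
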